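(* Let $\mathcal{H}$ be a finite-dimensional Hilbert space, $\tau$ a quantum channel on $\mathcal{H}$ (extended linearly to all operators on $\mathcal{H}$), and let $\Theta\neq0$ be an operator on $\mathcal{H}$ with $\tau(\Theta)=\lambda\Theta$ for some $\lambda$ with $|\lambda|=1$. Let $g=\mathrm{Tr}\sqrt{\Theta^{\dagger}\Theta}>0$. Then the density matrices $\rho=\sqrt{\Theta\Theta^{\dagger}}/g$ and $\sigma=\sqrt{\Theta^{\dagger}\Theta}/g$ are fixed points of $\tau$.
   Context: A quantum channel is a linear, completely positive, trace-preserving map on the space of linear operators on $\mathcal{H}$. *)

theory Defs
  imports "Jordan_Normal_Form.Schur_Decomposition"
begin

text \<open>Operators on the finite-dimensional Hilbert space C^n are complex n x n matrices.\<close>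

definition mtrace :: "complex mat \<Rightarrow> complex" where
  "mtrace A = (\<Sum>i<dim_row A. A $$ (i, i))"

definition psd :: "complex mat \<Rightarrow> bool" where
  "psd A \<longleftrightarrow> A \<in> carrier_mat (dim_row A) (dim_row A) \<and>
     (\<forall>v \<in> carrier_vec (dim_row A).
        Im (conjugate v \<bullet> (A *\<^sub>v v)) = 0 \<and> Re (conjugate v \<bullet> (A *\<^sub>v v)) \<ge> 0)"

definition msqrt :: "complex mat \<Rightarrow> complex mat" where
  "msqrt A = (THE B. psd B \<and> B * B = A)"

definition density_matrix :: "nat \<Rightarrow> complex mat \<Rightarrow> bool" where
  "density_matrix n A \<longleftrightarrow> A \<in> carrier_mat n n \<and> psd A \<and> mtrace A = 1"

text \<open>The amplification id_k \<otimes> \<tau> acting on (k*n) x (k*n) matrices, viewed as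
  k x k block matrices with n x n blocks (index p = i*n + a).\<close>
definition ampl :: "nat \<Rightarrow> nat \<Rightarrow> (complex mat \<Rightarrow> complex mat) \<Rightarrow> complex mat \<Rightarrow> complex mat" where
  "ampl k n \<tau> M = mat (k * n) (k * n) (\<lambda>(p, q).
      \<tau> (mat n n (\<lambda>(a, b). M $$ ((p div n) * n + a, (q div n) * n + b))) $$ (p mod n, q mod n))"

definition linear_map_mat :: "nat \<Rightarrow> (complex mat \<Rightarrow> complex mat) \<Rightarrow> bool" where
  "linear_map_mat n \<tau> \<longleftrightarrow>
     (\<forall>A \<in> carrier_mat n n. \<tau> A \<in> carrier_mat n n) \<and>
     (\<forall>A \<in> carrier_mat n n. \<forall>B \<in> carrier_mat n n. \<tau> (A + B) = \<tau> A + \<tau> B) \<and>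
     (\<forall>c. \<forall>A \<in> carrier_mat n n. \<tau> (c \<cdot>\<^sub>m A) = c \<cdot>\<^sub>m \<tau> A)"

definition completely_positive :: "nat \<Rightarrow> (complex mat \<Rightarrow> complex mat) \<Rightarrow> bool" where
  "completely_positive n \<tau> \<longleftrightarrow>
     (\<forall>k. \<forall>M \<in> carrier_mat (k * n) (k * n). psd M \<longrightarrow> psd (ampl k n \<tau> M))"

definition trace_preserving :: "nat \<Rightarrow> (complex mat \<Rightarrow> complex mat) \<Rightarrow> bool" where
  "trace_preserving n \<tau> \<longleftrightarrow> (\<forall>A \<in> carrier_mat n n. mtrace (\<tau> A) = mtrace A)"

definition quantum_channel :: "nat \<Rightarrow> (complex mat \<Rightarrow> complex mat) \<Rightarrow> bool" where
  "quantum_channel n \<tau> \<longleftrightarrow>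
     linear_map_mat n \<tau> \<and> completely_positive n \<tau> \<and> trace_preserving n \<tau>"

end

theory Submission
  imports Defs
begin

text \<open>
  Write the polar decomposition \<open>\<Theta> = U Q\<close> with \<open>Q = \<surd>(\<Theta>\<^sup>\<dagger>\<Theta>)\<close> and \<open>U\<close> a partial
  isometry; then \<open>P = U Q U\<^sup>\<dagger> = \<surd>(\<Theta>\<Theta>\<^sup>\<dagger>)\<close> and \<open>tr P = tr Q = g\<close>.  The block matrix
  \<open>M = [[P, \<Theta>], [\<Theta>\<^sup>\<dagger>, Q]] = (U; 1) Q (U; 1)\<^sup>\<dagger>\<close> is positive, hence by complete positivity so is
  \<open>N = [[\<tau> P, \<lambda>\<Theta>], [\<tau> \<Theta>\<^sup>\<dagger>, \<tau> Q]]\<close>.  Compressing \<open>N\<close> by \<open>T = (-\<lambda>U; 1)\<close> and using that \<open>\<tau>\<close>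
  preserves traces gives \<open>tr (T\<^sup>\<dagger> N T) = -tr ((\<tau> P) (1 - U U\<^sup>\<dagger>)) \<le> 0\<close>.  A positive matrix whose
  compression has nonpositive trace annihilates the compressing matrix, so \<open>N T = 0\<close>, i.e.
  \<open>\<tau> Q = Q\<close> and \<open>(\<tau> P) U = \<Theta>\<close>; the trace then vanishes, so \<open>\<tau> P\<close> lives on the range of \<open>U\<close> and
  \<open>\<tau> P = \<Theta> U\<^sup>\<dagger> = P\<close>.
\<close>

section \<open>Adjoints\<close>

lemma square_mult_carrier_mat [simp]:
  "A \<in> carrier_mat n n \<Longrightarrow> B \<in> carrier_mat n n \<Longrightarrow> A * B \<in> carrier_mat n n"
  by (rule mult_carrier_mat)

lemma mat_adjoint_eq:
  "mat_adjoint A = mat (dim_col A) (dim_row A) (\<lambda>(i, j). conjugate (A $$ (j, i)))"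
  unfolding mat_adjoint_def by (rule eq_matI) (auto simp: mat_of_rows_def)

lemma dim_mat_adjoint [simp]:
  "dim_row (mat_adjoint A) = dim_col A" "dim_col (mat_adjoint A) = dim_row A"
  by (simp_all add: mat_adjoint_eq)

lemma mat_adjoint_carrier [simp, intro]: "A \<in> carrier_mat n m \<Longrightarrow> mat_adjoint A \<in> carrier_mat m n"
  by (simp add: mat_adjoint_eq)

lemma index_mat_adjoint [simp]:
  "i < dim_col A \<Longrightarrow> j < dim_row A \<Longrightarrow> mat_adjoint A $$ (i, j) = conjugate (A $$ (j, i))"
  by (simp add: mat_adjoint_eq)

lemma mat_adjoint_adjoint [simp]: "mat_adjoint (mat_adjoint A) = A"
  by (rule eq_matI) auto

lemma mat_adjoint_mult:
  "A \<in> carrier_mat n k \<Longrightarrow> B \<in> carrier_mat k m \<Longrightarrow> mat_adjoint (A * B) = mat_adjoint B * mat_adjoint A"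
  by (rule eq_matI) (auto simp: scalar_prod_def sum_conjugate conjugate_dist_mul mult.commute
      intro!: sum.cong)

lemma mat_adjoint_minus:
  fixes A :: "'a :: conjugatable_field mat"
  assumes "A \<in> carrier_mat n m" "B \<in> carrier_mat n m"
  shows "mat_adjoint (A - B) = mat_adjoint A - mat_adjoint B"
proof -
  have "conjugate (a - b) = conjugate a - conjugate b" for a b :: 'a
    using conjugate_dist_add[of a "- b"] by (simp add: conjugate_neg)
  thus ?thesis
    using assms by (intro eq_matI) auto
qed

lemma mat_adjoint_uminus: "mat_adjoint (- A) = - mat_adjoint A"
  by (rule eq_matI) (auto simp: conjugate_neg)

lemma mat_adjoint_smult: "mat_adjoint (c \<cdot>\<^sub>m A) = conjugate c \<cdot>\<^sub>m mat_adjoint A"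
  by (rule eq_matI) (auto simp: conjugate_dist_mul)

lemma mat_adjoint_one [simp]: "mat_adjoint (1\<^sub>m n :: complex mat) = 1\<^sub>m n"
  by (rule eq_matI) auto

lemma mat_adjoint_zero [simp]: "mat_adjoint (0\<^sub>m n m) = 0\<^sub>m m n"
  by (rule eq_matI) auto

lemma mat_adjoint_diag: "mat_adjoint (mat_diag n f) = mat_diag n (\<lambda>i. conjugate (f i))"
  by (rule eq_matI) (auto simp: mat_diag_def)

lemma mat_adjoint_four_block:
  assumes "A \<in> carrier_mat n1 m1" "B \<in> carrier_mat n1 m2" "C \<in> carrier_mat n2 m1" "D \<in> carrier_mat n2 m2"
  shows "mat_adjoint (four_block_mat A B C D) =
    four_block_mat (mat_adjoint A) (mat_adjoint C) (mat_adjoint B) (mat_adjoint D)"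
  using assms by (intro eq_matI) auto

lemma cscalar_prod_mat_adjoint:
  fixes A :: "complex mat"
  assumes "A \<in> carrier_mat n m" "x \<in> carrier_vec n" "y \<in> carrier_vec m"
  shows "conjugate x \<bullet> (A *\<^sub>v y) = conjugate (mat_adjoint A *\<^sub>v x) \<bullet> y"
proof -
  have "conjugate x \<bullet> (A *\<^sub>v y) = (\<Sum>k<n. \<Sum>l<m. cnj (x $ k) * A $$ (k, l) * y $ l)"
    using assms by (auto simp: scalar_prod_def sum_distrib_left atLeast0LessThan mult.assoc
        intro!: sum.cong)
  also have "\<dots> = (\<Sum>l<m. \<Sum>k<n. cnj (x $ k) * A $$ (k, l) * y $ l)"
    by (rule sum.swap)
  also have "\<dots> = conjugate (mat_adjoint A *\<^sub>v x) \<bullet> y"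
    using assms
    apply (auto simp: scalar_prod_def atLeast0LessThan cnj_sum intro!: sum.cong)
    by (simp add: sum_distrib_left ac_simps)
  finally show ?thesis .
qed

lemma mat_adjoint_mult_self_eq_zero:
  fixes B :: "complex mat"
  assumes "B \<in> carrier_mat n m" and "mat_adjoint B * B = 0\<^sub>m m m"
  shows "B = 0\<^sub>m n m"
proof (rule eq_matI)
  fix i j assume "i < dim_row (0\<^sub>m n m)" "j < dim_col (0\<^sub>m n m)"
  hence i: "i < n" and j: "j < m" by auto
  have col: "col B j \<in> carrier_vec n"
    using assms(1) j by simp
  have "conjugate (col B j) = row (mat_adjoint B) j"
    using assms(1) j by (intro eq_vecI) auto
  hence "col B j \<bullet>c col B j = (mat_adjoint B * B) $$ (j, j)"
    using assms(1) j conjugate_vec_sprod_comm[OF col col] by simp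
  hence col0: "col B j = 0\<^sub>v n"
    using assms(2) j conjugate_square_eq_0_vec[OF col] by simp
  show "B $$ (i, j) = 0\<^sub>m n m $$ (i, j)"
    using assms(1) i j arg_cong[OF col0, of "\<lambda>v. v $ i"] by simp
qed (use assms in auto)


section \<open>Positive semidefinite matrices\<close>

definition sesq :: "complex mat \<Rightarrow> complex vec \<Rightarrow> complex vec \<Rightarrow> complex" where
  "sesq A x y = conjugate x \<bullet> (A *\<^sub>v y)"

lemma psd_carrier: "psd A \<Longrightarrow> A \<in> carrier_mat (dim_row A) (dim_row A)"
  unfolding psd_def by auto

lemma psdD: "psd A \<Longrightarrow> A \<in> carrier_mat n n \<Longrightarrow> v \<in> carrier_vec n \<Longrightarrow> 0 \<le> sesq A v v"
  unfolding psd_def sesq_def less_eq_complex_def by auto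

lemma psdI:
  "A \<in> carrier_mat n n \<Longrightarrow> (\<And>v. v \<in> carrier_vec n \<Longrightarrow> 0 \<le> sesq A v v) \<Longrightarrow> psd A"
  unfolding psd_def sesq_def less_eq_complex_def by auto

lemma sesq_add_smult:
  assumes A: "A \<in> carrier_mat n n" and x: "x \<in> carrier_vec n" and y: "y \<in> carrier_vec n"
  shows "sesq A (x + c \<cdot>\<^sub>v y) (x + c \<cdot>\<^sub>v y) =
    sesq A x x + c * sesq A x y + cnj c * sesq A y x + cnj c * c * sesq A y y"
proof -
  have "conjugate (x + c \<cdot>\<^sub>v y) = conjugate x + cnj c \<cdot>\<^sub>v conjugate y"
    using x y by (intro eq_vecI) auto
  moreover have "A *\<^sub>v (x + c \<cdot>\<^sub>v y) = A *\<^sub>v x + c \<cdot>\<^sub>v (A *\<^sub>v y)"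
    using A x y by (simp add: mult_add_distrib_mat_vec mult_mat_vec)
  ultimately show ?thesis
    unfolding sesq_def using A x y
    by (simp add: add_scalar_prod_distrib[of _ n] scalar_prod_add_distrib[of _ n] algebra_simps)
qed

lemma sesq_unit_vec:
  "A \<in> carrier_mat n n \<Longrightarrow> i < n \<Longrightarrow> j < n \<Longrightarrow> sesq A (unit_vec n i) (unit_vec n j) = A $$ (i, j)"
proof -
  have "conjugate (unit_vec n i) = (unit_vec n i :: complex vec)"
    by (intro eq_vecI) (auto simp: unit_vec_def)
  thus "A \<in> carrier_mat n n \<Longrightarrow> i < n \<Longrightarrow> j < n \<Longrightarrow> sesq A (unit_vec n i) (unit_vec n j) = A $$ (i, j)"
    by (simp add: sesq_def)
qed

lemma psd_hermitian:
  assumes "psd A"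
  shows "mat_adjoint A = A"
proof -
  obtain n where A: "A \<in> carrier_mat n n"
    using psd_carrier[OF assms] by blast
  have entry: "A $$ (j, i) = cnj (A $$ (i, j))" if i: "i < n" and j: "j < n" for i j
  proof -
    let ?e = "unit_vec n :: nat \<Rightarrow> complex vec"
    have expand: "sesq A (?e i + c \<cdot>\<^sub>v ?e j) (?e i + c \<cdot>\<^sub>v ?e j) =
        A $$ (i, i) + c * A $$ (i, j) + cnj c * A $$ (j, i) + cnj c * c * A $$ (j, j)" for c
      using sesq_add_smult[OF A unit_vec_carrier[where i = i] unit_vec_carrier[where i = j], where c = c]
        sesq_unit_vec[OF A i i] sesq_unit_vec[OF A i j] sesq_unit_vec[OF A j i]
        sesq_unit_vec[OF A j j] by simp
    have real: "Im (sesq A v v) = 0" if "v \<in> carrier_vec n" for v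
      using psdD[OF assms A that] by (simp add: less_eq_complex_def)
    have "Im (A $$ (i, i)) = 0" "Im (A $$ (j, j)) = 0"
      using real[of "?e i"] real[of "?e j"] sesq_unit_vec[OF A i i] sesq_unit_vec[OF A j j] by auto
    moreover have "Im (A $$ (i, i) + A $$ (i, j) + A $$ (j, i) + A $$ (j, j)) = 0"
      using real[of "?e i + 1 \<cdot>\<^sub>v ?e j"] expand[of 1] by simp
    moreover have "Im (A $$ (i, i) + \<i> * A $$ (i, j) - \<i> * A $$ (j, i) + A $$ (j, j)) = 0"
      using real[of "?e i + \<i> \<cdot>\<^sub>v ?e j"] expand[of \<i>] by simp
    ultimately show ?thesis
      by (simp add: complex_eq_iff)
  qed
  show ?thesis
  proof (rule eq_matI)
    fix i j assume "i < dim_row A" "j < dim_col A"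
    thus "mat_adjoint A $$ (i, j) = A $$ (i, j)"
      using A entry[of j i] by simp
  qed (use A in auto)
qed

lemma hermitian_sesq_swap:
  assumes "A \<in> carrier_mat n n" "mat_adjoint A = A" "x \<in> carrier_vec n" "y \<in> carrier_vec n"
  shows "sesq A x y = cnj (sesq A y x)"
proof -
  have "sesq A x y = conjugate (A *\<^sub>v x) \<bullet> y"
    unfolding sesq_def using cscalar_prod_mat_adjoint[OF assms(1,3,4)] assms(2) by simp
  also have "\<dots> = y \<bullet>c (A *\<^sub>v x)"
    using assms by (subst conjugate_vec_sprod_comm[of _ n]) auto
  also have "\<dots> = cnj (sesq A y x)"
    unfolding sesq_def using assms conjugate_conjugate_sprod[of y n "A *\<^sub>v x"] by simp
  finally show ?thesis .
qed

lemma real_eq_zero_if_le_quadratic: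
  fixes s c :: real
  assumes s: "0 \<le> s" and c: "0 \<le> c" and le: "\<And>t. 0 < t \<Longrightarrow> 2 * t * s \<le> t * t * c"
  shows "s = 0"
proof (rule ccontr)
  assume "s \<noteq> 0"
  hence pos: "0 < s"
    using s by simp
  define t where "t = s / (c + 1)"
  have t: "0 < t"
    using pos c by (simp add: t_def)
  have "t * (2 * s) \<le> t * (t * c)"
    using le[OF t] by (simp add: ac_simps)
  hence "2 * s \<le> t * c"
    using t by simp
  moreover have "t * c < s"
    unfolding t_def using pos c by (simp add: pos_divide_less_eq algebra_simps)
  ultimately show False
    using pos by simp
qed

lemma psd_sesq_eq_zero:
  assumes p: "psd A" and A: "A \<in> carrier_mat n n" and v: "v \<in> carrier_vec n"
    and zero: "sesq A v v = 0"
  shows "A *\<^sub>v v = 0\<^sub>v n"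
proof -
  define w where "w = A *\<^sub>v v"
  have w: "w \<in> carrier_vec n"
    using A v by (simp add: w_def)
  define s where "s = conjugate w \<bullet> w"
  define c where "c = sesq A w w"
  have s: "Im s = 0" "Re s \<ge> 0"
    using conjugate_square_ge_0_vec[of w] conjugate_vec_sprod_comm[OF w w]
    by (auto simp: s_def less_eq_complex_def)
  have c: "Re c \<ge> 0"
    using psdD[OF p A w] by (simp add: c_def less_eq_complex_def)
  have wv: "sesq A w v = s"
    by (simp add: sesq_def s_def w_def)
  have "cnj s = s"
    using s(1) by (simp add: complex_eq_iff)
  hence vw: "sesq A v w = s"
    using hermitian_sesq_swap[OF A psd_hermitian[OF p] v w] wv by simp
  \<comment> \<open>positivity along the line \<open>v - t w\<close> for small \<open>t > 0\<close>\<close>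
  have "2 * t * Re s \<le> t * t * Re c" if "t > 0" for t :: real
  proof -
    let ?u = "v + complex_of_real (- t) \<cdot>\<^sub>v w"
    have "sesq A ?u ?u = complex_of_real (t * t) * c - complex_of_real (2 * t) * s"
      unfolding sesq_add_smult[OF A v w] zero wv vw c_def[symmetric] by (simp add: algebra_simps)
    moreover have "0 \<le> Re (sesq A ?u ?u)"
      using psdD[OF p A, of ?u] v w by (simp add: less_eq_complex_def)
    ultimately show ?thesis
      by simp
  qed
  hence "Re s = 0"
    by (rule real_eq_zero_if_le_quadratic[OF s(2) c])
  hence "w \<bullet>c w = 0"
    using s conjugate_vec_sprod_comm[OF w w] by (simp add: s_def complex_eq_iff)
  thus ?thesis
    using w by (simp add: w_def)
qed

lemma sesq_congruence:
  assumes X: "X \<in> carrier_mat m n" and B: "B \<in> carrier_mat n n" and v: "v \<in> carrier_vec m"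
  shows "sesq (X * B * mat_adjoint X) v v = sesq B (mat_adjoint X *\<^sub>v v) (mat_adjoint X *\<^sub>v v)"
proof -
  have w: "mat_adjoint X *\<^sub>v v \<in> carrier_vec n"
    using mult_mat_vec_carrier[OF mat_adjoint_carrier[OF X] v] .
  have "(X * B * mat_adjoint X) *\<^sub>v v = X *\<^sub>v (B *\<^sub>v (mat_adjoint X *\<^sub>v v))"
    using X B v w assoc_mult_mat_vec[of "X * B" m n "mat_adjoint X" m v]
      assoc_mult_mat_vec[OF X B] by simp
  thus ?thesis
    unfolding sesq_def using cscalar_prod_mat_adjoint[OF X v mult_mat_vec_carrier[OF B w]] by simp
qed

lemma psd_congruence:
  assumes "psd B" "X \<in> carrier_mat m n" "B \<in> carrier_mat n n"
  shows "psd (X * B * mat_adjoint X)"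
  using assms by (intro psdI[of _ m]) (auto simp: sesq_congruence intro!: psdD[of B n] mult_mat_vec_carrier[of _ n m])

lemma psd_smult:
  assumes "psd A" "0 \<le> c"
  shows "psd (c \<cdot>\<^sub>m A)"
proof -
  obtain n where A: "A \<in> carrier_mat n n"
    using psd_carrier[OF assms(1)] by blast
  have "sesq (c \<cdot>\<^sub>m A) v v = c * sesq A v v" if "v \<in> carrier_vec n" for v
  proof -
    have "(c \<cdot>\<^sub>m A) *\<^sub>v v = c \<cdot>\<^sub>v (A *\<^sub>v v)"
      using A that by (intro eq_vecI) (auto simp: scalar_prod_def sum_distrib_left ac_simps)
    thus ?thesis
      using A that by (simp add: sesq_def)
  qed
  thus ?thesis
    using A assms by (intro psdI[of _ n]) (auto intro: psdD mult_nonneg_nonneg)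
qed

lemma psd_diag:
  assumes "\<And>i. i < n \<Longrightarrow> 0 \<le> f i"
  shows "psd (mat_diag n f)"
proof (rule psdI[OF mat_diag_dim])
  fix v :: "complex vec" assume v: "v \<in> carrier_vec n"
  have "mat_diag n f *\<^sub>v v = vec n (\<lambda>i. f i * v $ i)"
  proof (rule eq_vecI)
    fix i assume "i < dim_vec (vec n (\<lambda>i. f i * v $ i))"
    hence i: "i < n" by simp
    have "(mat_diag n f *\<^sub>v v) $ i = (\<Sum>k\<in>{0..<n}. (if i = k then f k else 0) * v $ k)"
      using i v by (simp add: mat_diag_def scalar_prod_def)
    also have "\<dots> = (\<Sum>k\<in>{0..<n}. if k = i then f i * v $ i else 0)"
      by (rule sum.cong) auto
    finally show "(mat_diag n f *\<^sub>v v) $ i = vec n (\<lambda>i. f i * v $ i) $ i"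
      using i by simp
  qed (use v in \<open>simp add: mat_diag_def\<close>)
  hence "sesq (mat_diag n f) v v = (\<Sum>i<n. f i * (v $ i * cnj (v $ i)))"
    using v by (simp add: sesq_def scalar_prod_def atLeast0LessThan ac_simps)
  also have "0 \<le> \<dots>"
  proof (rule sum_nonneg)
    fix i assume "i \<in> {..<n}"
    thus "0 \<le> f i * (v $ i * cnj (v $ i))"
      using assms[of i] conjugate_square_positive[of "v $ i"] by (simp add: mult_nonneg_nonneg)
  qed
  finally show "0 \<le> sesq (mat_diag n f) v v" .
qed

lemma psd_one: "psd (1\<^sub>m n)"
  using psd_diag[of n "\<lambda>_. 1"] by (simp add: less_eq_complex_def)


lemma psd_mult_self_adjoint:
  assumes "A \<in> carrier_mat n m"
  shows "psd (A * mat_adjoint A)"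
  using psd_congruence[OF psd_one assms one_carrier_mat] assms by simp

section \<open>Traces\<close>

lemma mtrace_eq_sum: "A \<in> carrier_mat n n \<Longrightarrow> mtrace A = (\<Sum>i<n. A $$ (i, i))"
  unfolding mtrace_def by simp

lemma mtrace_mult_comm:
  assumes "A \<in> carrier_mat n m" "B \<in> carrier_mat m n"
  shows "mtrace (A * B) = mtrace (B * A)"
proof -
  have "mtrace (A * B) = (\<Sum>i<n. \<Sum>k<m. A $$ (i, k) * B $$ (k, i))"
    unfolding mtrace_def using assms by (auto simp: scalar_prod_def atLeast0LessThan intro!: sum.cong)
  also have "\<dots> = (\<Sum>k<m. \<Sum>i<n. B $$ (k, i) * A $$ (i, k))"
    by (subst sum.swap) (simp add: mult.commute)
  also have "\<dots> = mtrace (B * A)"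
    unfolding mtrace_def using assms by (auto simp: scalar_prod_def atLeast0LessThan intro!: sum.cong)
  finally show ?thesis .
qed

lemma mtrace_add:
  "A \<in> carrier_mat n n \<Longrightarrow> B \<in> carrier_mat n n \<Longrightarrow> mtrace (A + B) = mtrace A + mtrace B"
  unfolding mtrace_def by (simp add: sum.distrib)

lemma mtrace_minus:
  "A \<in> carrier_mat n n \<Longrightarrow> B \<in> carrier_mat n n \<Longrightarrow> mtrace (A - B) = mtrace A - mtrace B"
  unfolding mtrace_def by (simp add: sum_subtractf)

lemma mtrace_uminus: "A \<in> carrier_mat n n \<Longrightarrow> mtrace (- A) = - mtrace A"
  unfolding mtrace_def by (simp add: sum_negf)

lemma mtrace_smult: "A \<in> carrier_mat n n \<Longrightarrow> mtrace (c \<cdot>\<^sub>m A) = c * mtrace A"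
  unfolding mtrace_def by (simp add: sum_distrib_left)

lemma diag_mat_adjoint_mult_mult:
  assumes A: "A \<in> carrier_mat n n" and T: "T \<in> carrier_mat n k" and j: "j < k"
  shows "(mat_adjoint T * A * T) $$ (j, j) = sesq A (col T j) (col T j)"
proof -
  have "mat_adjoint T * A * T = mat_adjoint T * (A * T)"
    using A T by (intro assoc_mult_mat) auto
  moreover have "row (mat_adjoint T) j = conjugate (col T j)"
    using T j by (intro eq_vecI) auto
  moreover have "col (A * T) j = A *\<^sub>v col T j"
    using A T j by (intro eq_vecI) auto
  ultimately show ?thesis
    using A T j by (simp add: sesq_def)
qed

lemma psd_mtrace_nonneg:
  assumes "psd A"
  shows "0 \<le> mtrace A"
proof -
  obtain n where A: "A \<in> carrier_mat n n"
    using psd_carrier[OF assms] by blast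
  have "mtrace A = (\<Sum>i<n. sesq A (unit_vec n i) (unit_vec n i))"
    using A by (simp add: mtrace_eq_sum sesq_unit_vec)
  also have "0 \<le> \<dots>"
    by (rule sum_nonneg) (simp add: psdD[OF assms A])
  finally show ?thesis .
qed

lemma psd_mult_eq_zero_if_mtrace_nonpos:
  assumes p: "psd A" and A: "A \<in> carrier_mat n n" and T: "T \<in> carrier_mat n k"
    and tr: "Re (mtrace (mat_adjoint T * A * T)) \<le> 0"
  shows "A * T = 0\<^sub>m n k"
proof -
  have nonneg: "0 \<le> sesq A (col T j) (col T j)" for j
    using T by (intro psdD[OF p A]) auto
  have "mtrace (mat_adjoint T * A * T) = (\<Sum>j<k. sesq A (col T j) (col T j))"
  proof -
    have "mat_adjoint T * A * T \<in> carrier_mat k k"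
      using A T by (intro mult_carrier_mat[of _ k n]) auto
    thus ?thesis
      using diag_mat_adjoint_mult_mult[OF A T] by (simp add: mtrace_eq_sum del: index_mult_mat)
  qed
  with tr have "(\<Sum>j<k. Re (sesq A (col T j) (col T j))) \<le> 0"
    by (simp add: Re_sum)
  moreover have "0 \<le> Re (sesq A (col T j) (col T j))" for j
    using nonneg[of j] by (simp add: less_eq_complex_def)
  ultimately have "\<forall>j\<in>{..<k}. Re (sesq A (col T j) (col T j)) = 0"
    using sum_nonneg_eq_0_iff[of "{..<k}" "\<lambda>j. Re (sesq A (col T j) (col T j))"]
    by (simp add: order_antisym sum_nonneg)
  hence "sesq A (col T j) (col T j) = 0" if "j < k" for j
    using nonneg[of j] that by (simp add: less_eq_complex_def complex_eq_iff)
  hence col: "A *\<^sub>v col T j = 0\<^sub>v n" if "j < k" for j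
    using that T by (intro psd_sesq_eq_zero[OF p A]) auto
  show ?thesis
  proof (rule eq_matI)
    fix i j assume "i < dim_row (0\<^sub>m n k)" "j < dim_col (0\<^sub>m n k)"
    hence i: "i < n" and j: "j < k"
      by auto
    have "(A *\<^sub>v col T j) $ i = 0"
      using col[OF j] i by simp
    thus "(A * T) $$ (i, j) = 0\<^sub>m n k $$ (i, j)"
      using A T i j by simp
  qed (use A T in auto)
qed

lemma psd_mtrace_pos:
  assumes p: "psd A" and A: "A \<in> carrier_mat n n" and nz: "A \<noteq> 0\<^sub>m n n"
  shows "0 < mtrace A"
proof -
  have "\<not> Re (mtrace A) \<le> 0"
    using psd_mult_eq_zero_if_mtrace_nonpos[OF p A one_carrier_mat] A nz by auto
  thus ?thesis
    using psd_mtrace_nonneg[OF p] by (auto simp: less_eq_complex_def less_complex_def)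
qed

lemma mtrace_mult_projection:
  assumes A: "A \<in> carrier_mat n n" and R: "R \<in> carrier_mat n n"
    and herm: "mat_adjoint R = R" and idem: "R * R = R"
  shows "mtrace (A * R) = mtrace (mat_adjoint R * A * R)"
proof -
  have "mtrace (mat_adjoint R * A * R) = mtrace (R * (A * R))"
    unfolding herm using A R by (simp add: assoc_mult_mat[of _ n n _ n _ n])
  also have "\<dots> = mtrace (A * R * R)"
    using A R by (simp add: mtrace_mult_comm[of R n n "A * R"])
  finally show ?thesis
    using A R idem by (simp add: assoc_mult_mat[of _ n n _ n _ n])
qed


section \<open>The spectral theorem for Hermitian matrices\<close>

definition unitary_mat :: "nat \<Rightarrow> complex mat \<Rightarrow> bool" where
  "unitary_mat n W \<longleftrightarrow>
     W \<in> carrier_mat n n \<and> mat_adjoint W * W = 1\<^sub>m n \<and> W * mat_adjoint W = 1\<^sub>m n"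

lemma unitary_matI: "W \<in> carrier_mat n n \<Longrightarrow> mat_adjoint W * W = 1\<^sub>m n \<Longrightarrow> unitary_mat n W"
  unfolding unitary_mat_def using mat_mult_left_right_inverse[OF mat_adjoint_carrier] by blast

lemma unitary_matD:
  assumes "unitary_mat n W"
  shows "W \<in> carrier_mat n n" "mat_adjoint W * W = 1\<^sub>m n" "W * mat_adjoint W = 1\<^sub>m n"
  using assms unfolding unitary_mat_def by auto

lemma unitary_mat_cancel:
  assumes "unitary_mat n W" "X \<in> carrier_mat n m"
  shows "mat_adjoint W * (W * X) = X" "W * (mat_adjoint W * X) = X"
  using assms unitary_matD[OF assms(1)]
  by (simp_all flip: assoc_mult_mat[of _ n n _ n _ m])

lemma unitary_mat_mult:
  assumes U: "unitary_mat n U" and V: "unitary_mat n V"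
  shows "unitary_mat n (U * V)"
proof (rule unitary_matI)
  note c = unitary_matD(1)[OF U] unitary_matD(1)[OF V]
  show "U * V \<in> carrier_mat n n"
    using c by simp
  have "mat_adjoint (U * V) * (U * V) = mat_adjoint V * (mat_adjoint U * (U * V))"
    using c by (simp add: mat_adjoint_mult[of _ n n] assoc_mult_mat[of _ n n _ n _ n])
  also have "mat_adjoint U * (U * V) = V"
    using c unitary_matD(2)[OF U] by (simp flip: assoc_mult_mat[of _ n n _ n _ n])
  finally show "mat_adjoint (U * V) * (U * V) = 1\<^sub>m n"
    using unitary_matD(2)[OF V] by simp
qed

lemma unitary_mat_col_norm:
  assumes "unitary_mat n W" "i < n"
  shows "conjugate (col W i) \<bullet> col W i = 1"
proof -
  have "row (mat_adjoint W) i = conjugate (col W i)"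
    using unitary_matD(1)[OF assms(1)] assms(2) by (intro eq_vecI) auto
  moreover have "(mat_adjoint W * W) $$ (i, i) = 1"
    using assms by (simp add: unitary_matD)
  ultimately show ?thesis
    using unitary_matD(1)[OF assms(1)] assms(2) by simp
qed

definition vec_normalize :: "complex vec \<Rightarrow> complex vec" where
  "vec_normalize w = complex_of_real (1 / sqrt (Re (conjugate w \<bullet> w))) \<cdot>\<^sub>v w"

lemma vec_normalize_unit:
  assumes w: "w \<in> carrier_vec n" and nz: "w \<noteq> 0\<^sub>v n"
  shows "conjugate (vec_normalize w) \<bullet> vec_normalize w = 1"
proof -
  define s where "s = conjugate w \<bullet> w"
  have "w \<bullet>c w > 0"
    using w nz by simp
  hence s: "Im s = 0" "Re s > 0"
    using conjugate_vec_sprod_comm[OF w w] by (auto simp: s_def less_complex_def)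
  have "conjugate (vec_normalize w) \<bullet> vec_normalize w
      = complex_of_real (1 / sqrt (Re s)) * complex_of_real (1 / sqrt (Re s)) * s"
    unfolding vec_normalize_def s_def using w by (simp add: conjugate_smult_vec)
  also have "\<dots> = complex_of_real (1 / sqrt (Re s) * (1 / sqrt (Re s))) * s"
    by (simp only: of_real_mult)
  also have "\<dots> = complex_of_real (1 / Re s) * s"
    using s real_sqrt_mult_self[of "Re s"] by simp
  also have "\<dots> = 1"
    using s by (simp add: complex_eq_iff)
  finally show ?thesis .
qed

lemma unitary_mat_of_corthogonal:
  assumes ws: "set ws \<subseteq> carrier_vec n" "corthogonal ws" "length ws = n"
  shows "unitary_mat n (mat_of_cols n (map vec_normalize ws))"
proof -
  define H where "H = mat_of_cols n (map vec_normalize ws)"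
  have ws_i: "ws ! i \<in> carrier_vec n" if "i < n" for i
    using ws that by auto
  have ws_i_nz: "ws ! i \<noteq> 0\<^sub>v n" if "i < n" for i
    using corthogonalD[OF ws(2), of i i] ws that by auto
  have H: "H \<in> carrier_mat n n"
    unfolding H_def using mat_of_cols_carrier(1)[of n "map vec_normalize ws"] ws(3) by simp
  have col_H: "col H i = vec_normalize (ws ! i)" if "i < n" for i
    unfolding H_def using that ws ws_i by (simp add: vec_normalize_def)
  have "mat_adjoint H * H = 1\<^sub>m n"
  proof (rule eq_matI)
    fix i j assume "i < dim_row (1\<^sub>m n)" "j < dim_col (1\<^sub>m n)"
    hence i: "i < n" and j: "j < n"
      by auto
    have "row (mat_adjoint H) i = conjugate (col H i)"
      using H i by (intro eq_vecI) auto
    hence "(mat_adjoint H * H) $$ (i, j) = conjugate (vec_normalize (ws ! i)) \<bullet> vec_normalize (ws ! j)"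
      using i j H col_H by simp
    also have "\<dots> = (if i = j then 1 else 0)"
    proof (cases "i = j")
      case True
      thus ?thesis
        using vec_normalize_unit[OF ws_i[OF i] ws_i_nz[OF i]] by simp
    next
      case False
      have "ws ! j \<bullet>c ws ! i = 0"
        using corthogonalD[OF ws(2), of j i] False i j ws by auto
      hence "conjugate (ws ! i) \<bullet> ws ! j = 0"
        using conjugate_vec_sprod_comm[OF ws_i[OF j] ws_i[OF i]] by simp
      thus ?thesis
        using False ws_i[OF i] ws_i[OF j] by (simp add: vec_normalize_def conjugate_smult_vec)
    qed
    finally show "(mat_adjoint H * H) $$ (i, j) = 1\<^sub>m n $$ (i, j)"
      using i j by simp
  qed (use H in auto)
  thus ?thesis
    unfolding H_def[symmetric] by (rule unitary_matI[OF H])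
qed

lemma unitary_mat_with_first_col:
  assumes u: "u \<in> carrier_vec n" and u1: "conjugate u \<bullet> u = 1" and n: "0 < n"
  obtains H where "unitary_mat n H" "col H 0 = u"
proof -
  interpret cof_vec_space n "TYPE(complex)" .
  have u0: "u \<noteq> 0\<^sub>v n"
    using u1 u by auto
  define b where "b = basis_completion u"
  define ws where "ws = gram_schmidt n b"
  from basis_completion[OF u u0, folded b_def]
  have dist_b: "distinct b" and indep: "\<not> lin_dep (set b)" and b: "set b \<subseteq> carrier_vec n"
    and hd_b: "hd b = u" and len_b: "length b = n"
    by auto
  from hd_b len_b n obtain vs where b_eq: "b = u # vs"
    by (cases b) auto
  from gram_schmidt_result[OF b dist_b indep refl, folded ws_def]
  have ws: "set ws \<subseteq> carrier_vec n" "corthogonal ws" "length ws = n"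
    by (auto simp: len_b)
  have "hd ws = u"
    using gram_schmidt_hd[OF u, of vs] unfolding ws_def b_eq .
  hence "col (mat_of_cols n (map vec_normalize ws)) 0 = u"
    using ws n u1 by (cases ws) (auto simp: vec_normalize_def)
  with unitary_mat_of_corthogonal[OF ws] show ?thesis
    by (rule that)
qed

lemma complex_mat_eigenvector_exists:
  assumes A: "(A :: complex mat) \<in> carrier_mat n n" and n: "0 < n"
  obtains \<mu> v where "v \<in> carrier_vec n" "v \<noteq> 0\<^sub>v n" "A *\<^sub>v v = \<mu> \<cdot>\<^sub>v v"
proof -
  have "degree (char_poly A) = n"
    using degree_monic_char_poly[OF A] by auto
  hence "\<not> constant (poly (char_poly A))"
    using n by (simp add: constant_degree)
  then obtain \<mu> where "poly (char_poly A) \<mu> = 0"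
    using fundamental_theorem_of_algebra by blast
  hence "eigenvalue A \<mu>"
    using eigenvalue_root_char_poly[OF A] by simp
  then obtain v where "eigenvector A v \<mu>"
    unfolding eigenvalue_def by blast
  thus ?thesis
    using that A unfolding eigenvector_def by auto
qed

lemma block_diag_mult:
  assumes "A1 \<in> carrier_mat n1 n1" "A2 \<in> carrier_mat n1 n1" "D1 \<in> carrier_mat n2 n2" "D2 \<in> carrier_mat n2 n2"
  shows "four_block_mat A1 (0\<^sub>m n1 n2) (0\<^sub>m n2 n1) D1 * four_block_mat A2 (0\<^sub>m n1 n2) (0\<^sub>m n2 n1) D2
    = four_block_mat (A1 * A2) (0\<^sub>m n1 n2) (0\<^sub>m n2 n1) (D1 * D2)"
  using assms by (subst mult_four_block_mat[of _ n1 n1 _ n2 _ n2]) auto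

lemma unitary_mat_block_diag:
  assumes W: "unitary_mat m W"
  shows "unitary_mat (Suc m) (four_block_mat (1\<^sub>m 1) (0\<^sub>m 1 m) (0\<^sub>m m 1) W)"
proof -
  note Wc = unitary_matD(1)[OF W]
  let ?B = "four_block_mat (1\<^sub>m 1) (0\<^sub>m 1 m) (0\<^sub>m m 1) W"
  have "mat_adjoint ?B * ?B = four_block_mat (1\<^sub>m 1 * 1\<^sub>m 1) (0\<^sub>m 1 m) (0\<^sub>m m 1) (mat_adjoint W * W)"
    unfolding mat_adjoint_four_block[OF one_carrier_mat zero_carrier_mat zero_carrier_mat Wc]
      mat_adjoint_zero mat_adjoint_one
    by (rule block_diag_mult) (use Wc in auto)
  also have "\<dots> = 1\<^sub>m (Suc m)"
    using four_block_one_mat[of 1 m] by (simp add: unitary_matD(2)[OF W])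
  finally show ?thesis
    using four_block_carrier_mat[OF one_carrier_mat[of 1] Wc] by (intro unitary_matI) simp_all
qed

lemma unitary_conj_eigenvector_first_col:
  assumes H: "unitary_mat n H" and u: "col H 0 = u" and A: "A \<in> carrier_mat n n"
    and eigen: "A *\<^sub>v u = \<mu> \<cdot>\<^sub>v u" and i: "i < n"
  shows "(mat_adjoint H * A * H) $$ (i, 0) = (if i = 0 then \<mu> else 0)"
proof -
  note Hc = unitary_matD(1)[OF H]
  have "mat_adjoint H * A * H = mat_adjoint H * (A * H)"
    using A Hc by (intro assoc_mult_mat) auto
  hence "(mat_adjoint H * A * H) $$ (i, 0) = row (mat_adjoint H) i \<bullet> col (A * H) 0"
    using i A Hc by simp
  also have "col (A * H) 0 = \<mu> \<cdot>\<^sub>v col H 0"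
    using A Hc u eigen i by (subst col_mult2[of _ n n]) auto
  also have "row (mat_adjoint H) i \<bullet> (\<mu> \<cdot>\<^sub>v col H 0) = \<mu> * (mat_adjoint H * H) $$ (i, 0)"
    using Hc i by simp
  finally show ?thesis
    using i by (simp add: unitary_matD(2)[OF H])
qed

lemma hermitian_block_of_first_col:
  assumes A: "A \<in> carrier_mat (Suc m) (Suc m)" and herm: "mat_adjoint A = A"
    and col0: "\<And>i. 0 < i \<Longrightarrow> i < Suc m \<Longrightarrow> A $$ (i, 0) = 0"
  defines "A' \<equiv> mat m m (\<lambda>(i, j). A $$ (Suc i, Suc j))"
  shows "A = four_block_mat (mat 1 1 (\<lambda>_. complex_of_real (Re (A $$ (0, 0))))) (0\<^sub>m 1 m) (0\<^sub>m m 1) A'"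
    and "mat_adjoint A' = A'"
proof -
  have entry: "A $$ (j, i) = cnj (A $$ (i, j))" if "i < Suc m" "j < Suc m" for i j
    using arg_cong[OF herm, of "\<lambda>B. B $$ (j, i)"] that A by simp
  show "A = four_block_mat (mat 1 1 (\<lambda>_. complex_of_real (Re (A $$ (0, 0))))) (0\<^sub>m 1 m) (0\<^sub>m m 1) A'"
  proof (rule eq_matI)
    fix i j assume "i < dim_row (four_block_mat (mat 1 1 (\<lambda>_. complex_of_real (Re (A $$ (0, 0))))) (0\<^sub>m 1 m) (0\<^sub>m m 1) A')"
      "j < dim_col (four_block_mat (mat 1 1 (\<lambda>_. complex_of_real (Re (A $$ (0, 0))))) (0\<^sub>m 1 m) (0\<^sub>m m 1) A')"
    hence i: "i < Suc m" and j: "j < Suc m"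
      by (auto simp: A'_def)
    have "Im (A $$ (0, 0)) = 0"
      using entry[of 0 0] by (simp add: complex_eq_iff)
    moreover have "A $$ (0, j) = 0" if "0 < j"
      using entry[OF _ j, of 0] col0[OF that j] by simp
    ultimately show "A $$ (i, j) = four_block_mat (mat 1 1 (\<lambda>_. complex_of_real (Re (A $$ (0, 0))))) (0\<^sub>m 1 m) (0\<^sub>m m 1) A' $$ (i, j)"
      using i j col0 by (cases i; cases j) (auto simp: A'_def complex_eq_iff)
  qed (use A in \<open>auto simp: A'_def\<close>)
  show "mat_adjoint A' = A'"
  proof (rule eq_matI)
    fix i j assume "i < dim_row A'" "j < dim_col A'"
    thus "mat_adjoint A' $$ (i, j) = A' $$ (i, j)"
      using entry[of "Suc i" "Suc j"] by (simp add: A'_def)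
  qed (simp_all add: A'_def)
qed

lemma hermitian_unitary_deflation:
  assumes A: "A \<in> carrier_mat (Suc m) (Suc m)" and herm: "mat_adjoint A = A"
  obtains H r A' where "unitary_mat (Suc m) H" "A' \<in> carrier_mat m m" "mat_adjoint A' = A'"
    "A = H * four_block_mat (mat 1 1 (\<lambda>_. complex_of_real r)) (0\<^sub>m 1 m) (0\<^sub>m m 1) A' * mat_adjoint H"
proof -
  note assoc = assoc_mult_mat[of _ "Suc m" "Suc m" _ "Suc m" _ "Suc m"]
  obtain \<mu> v where v: "v \<in> carrier_vec (Suc m)" "v \<noteq> 0\<^sub>v (Suc m)" and eigen: "A *\<^sub>v v = \<mu> \<cdot>\<^sub>v v"
    using complex_mat_eigenvector_exists[OF A zero_less_Suc] by blast
  define u where "u = vec_normalize v"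
  have u: "u \<in> carrier_vec (Suc m)" "conjugate u \<bullet> u = 1"
    using vec_normalize_unit[OF v] v(1) by (auto simp: u_def vec_normalize_def)
  have Au: "A *\<^sub>v u = \<mu> \<cdot>\<^sub>v u"
    using mult_mat_vec[OF A v(1)] eigen by (simp add: u_def vec_normalize_def smult_smult_assoc mult.commute)
  obtain H where H: "unitary_mat (Suc m) H" and col_H: "col H 0 = u"
    using unitary_mat_with_first_col[OF u] by blast
  note Hc = unitary_matD(1)[OF H]
  define B where "B = mat_adjoint H * A * H"
  have Bc: "B \<in> carrier_mat (Suc m) (Suc m)"
    unfolding B_def using A Hc by simp
  have herm_B: "mat_adjoint B = B"
    unfolding B_def using A Hc herm by (simp add: mat_adjoint_mult[of _ "Suc m" "Suc m" _ "Suc m"] assoc)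
  have col_B: "B $$ (i, 0) = 0" if "0 < i" "i < Suc m" for i
    using unitary_conj_eigenvector_first_col[OF H col_H A Au, of i] that by (simp add: B_def)
  define r where "r = Re (B $$ (0, 0))"
  define A' where "A' = mat m m (\<lambda>(i, j). B $$ (Suc i, Suc j))"
  note blocks = hermitian_block_of_first_col[OF Bc herm_B col_B, folded r_def A'_def]
  have "A = H * B * mat_adjoint H"
    unfolding B_def using A Hc
    by (simp add: assoc unitary_mat_cancel(2)[OF H, of _ "Suc m"] unitary_matD(3)[OF H])
  moreover have "A' \<in> carrier_mat m m"
    by (simp add: A'_def)
  ultimately show ?thesis
    using that[OF H _ blocks(2)] blocks(1) by simp
qed

theorem hermitian_spectral_decomposition:
  assumes "A \<in> carrier_mat n n" "mat_adjoint A = A"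
  shows "\<exists>W d. unitary_mat n W \<and> A = W * mat_diag n (\<lambda>i. complex_of_real (d i)) * mat_adjoint W"
  using assms
proof (induction n arbitrary: A)
  case 0
  thus ?case
    by (intro exI[of _ "1\<^sub>m 0"] exI[of _ "\<lambda>_. 0"]) (auto simp: unitary_mat_def intro!: eq_matI)
next
  case (Suc m)
  note assoc = assoc_mult_mat[of _ "Suc m" "Suc m" _ "Suc m" _ "Suc m"]
  obtain H r A' where H: "unitary_mat (Suc m) H" and A': "A' \<in> carrier_mat m m" "mat_adjoint A' = A'"
    and A_eq: "A = H * four_block_mat (mat 1 1 (\<lambda>_. complex_of_real r)) (0\<^sub>m 1 m) (0\<^sub>m m 1) A' * mat_adjoint H"
    using hermitian_unitary_deflation[of A m] Suc.prems by blast
  obtain W d' where W: "unitary_mat m W"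
    and A'_eq: "A' = W * mat_diag m (\<lambda>i. complex_of_real (d' i)) * mat_adjoint W"
    using Suc.IH[OF A'] by blast
  note Wc = unitary_matD(1)[OF W] and Hc = unitary_matD(1)[OF H]
  define B where "B = four_block_mat (1\<^sub>m 1) (0\<^sub>m 1 m) (0\<^sub>m m 1) W"
  define d where "d i = (if i = 0 then r else d' (i - 1))" for i
  have Bc: "B \<in> carrier_mat (Suc m) (Suc m)"
    unfolding B_def using four_block_carrier_mat[OF one_carrier_mat[of 1] Wc] by simp
  have "mat_diag (Suc m) (\<lambda>i. complex_of_real (d i)) = four_block_mat (mat 1 1 (\<lambda>_. complex_of_real r))
      (0\<^sub>m 1 m) (0\<^sub>m m 1) (mat_diag m (\<lambda>i. complex_of_real (d' i)))"
    by (rule eq_matI) (auto simp: mat_diag_def d_def)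
  hence BDB: "B * mat_diag (Suc m) (\<lambda>i. complex_of_real (d i)) * mat_adjoint B =
      four_block_mat (mat 1 1 (\<lambda>_. complex_of_real r)) (0\<^sub>m 1 m) (0\<^sub>m m 1) A'"
    unfolding B_def mat_adjoint_four_block[OF one_carrier_mat zero_carrier_mat zero_carrier_mat Wc]
      mat_adjoint_zero mat_adjoint_one A'_eq
    using Wc by (simp add: block_diag_mult[of _ "Suc 0" _ _ m])
  have "A = (H * B) * mat_diag (Suc m) (\<lambda>i. complex_of_real (d i)) * mat_adjoint (H * B)"
    unfolding A_eq BDB[symmetric] using Hc Bc by (simp add: mat_adjoint_mult[of _ "Suc m" "Suc m" _ "Suc m"] assoc)
  thus ?case
    using unitary_mat_mult[OF H unitary_mat_block_diag[OF W, folded B_def]] by blast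
qed

lemma dim_mat_diag [simp]: "dim_row (mat_diag n f) = n" "dim_col (mat_diag n f) = n"
  by (simp_all add: mat_diag_def)

lemma mat_diag_cong: "(\<And>i. i < n \<Longrightarrow> f i = g i) \<Longrightarrow> mat_diag n f = mat_diag n g"
  by (rule eq_matI) (auto simp: mat_diag_def)

lemma unitary_diag_col_eigenvector:
  assumes W: "unitary_mat n W" and i: "i < n"
  shows "(W * mat_diag n f * mat_adjoint W) *\<^sub>v col W i = f i \<cdot>\<^sub>v col W i"
proof -
  note Wc = unitary_matD(1)[OF W]
  have "(W * mat_diag n f * mat_adjoint W) * W = W * mat_diag n f"
    using Wc unitary_matD(2)[OF W] by (simp add: assoc_mult_mat[of _ n n _ n _ n])
  hence "(W * mat_diag n f * mat_adjoint W) *\<^sub>v col W i = col (W * mat_diag n f) i"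
    using Wc i by (metis col_mult2 mat_diag_dim square_mult_carrier_mat mat_adjoint_carrier)
  also have "\<dots> = f i \<cdot>\<^sub>v col W i"
    using Wc i by (intro eq_vecI) (auto simp: mat_diag_mult_right[OF Wc])
  finally show ?thesis .
qed

lemma psd_spectral_decomposition:
  assumes p: "psd A" and A: "A \<in> carrier_mat n n"
  obtains W d where "unitary_mat n W" "\<And>i. i < n \<Longrightarrow> 0 \<le> d i"
    "A = W * mat_diag n (\<lambda>i. complex_of_real (d i)) * mat_adjoint W"
proof -
  obtain W d where W: "unitary_mat n W"
    and A_eq: "A = W * mat_diag n (\<lambda>i. complex_of_real (d i)) * mat_adjoint W"
    using hermitian_spectral_decomposition[OF A psd_hermitian[OF p]] by blast
  have "0 \<le> d i" if i: "i < n" for i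
  proof -
    have col: "col W i \<in> carrier_vec n"
      using unitary_matD(1)[OF W] i by simp
    have "A *\<^sub>v col W i = complex_of_real (d i) \<cdot>\<^sub>v col W i"
      using unitary_diag_col_eigenvector[OF W i] A_eq by simp
    hence "sesq A (col W i) (col W i) = complex_of_real (d i)"
      using unitary_mat_col_norm[OF W i] col by (simp add: sesq_def)
    thus ?thesis
      using psdD[OF p A col] by (simp add: less_eq_complex_def)
  qed
  thus ?thesis
    using that W A_eq by blast
qed


section \<open>Square roots and polar decomposition\<close>

lemma psd_sqrt_exists:
  assumes p: "psd A"
  shows "\<exists>B. psd B \<and> B * B = A"
proof -
  obtain n where A: "A \<in> carrier_mat n n"
    using psd_carrier[OF p] by blast
  obtain W d where W: "unitary_mat n W" and d: "\<And>i. i < n \<Longrightarrow> 0 \<le> d i"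
    and A_eq: "A = W * mat_diag n (\<lambda>i. complex_of_real (d i)) * mat_adjoint W"
    using psd_spectral_decomposition[OF p A] by blast
  note Wc = unitary_matD(1)[OF W]
  define S where "S = mat_diag n (\<lambda>i. complex_of_real (sqrt (d i)))"
  have "psd (W * S * mat_adjoint W)"
    unfolding S_def using Wc d by (intro psd_congruence psd_diag) (auto simp: less_eq_complex_def)
  moreover have "S * S = mat_diag n (\<lambda>i. complex_of_real (d i))"
    unfolding S_def using d by (auto simp flip: of_real_mult intro: mat_diag_cong)
  moreover have "(W * S * mat_adjoint W) * (W * S * mat_adjoint W) = W * (S * S) * mat_adjoint W"
  proof -
    have "S \<in> carrier_mat n n"
      by (simp add: S_def)
    thus ?thesis
      using Wc by (simp add: assoc_mult_mat[of _ n n _ n _ n] unitary_mat_cancel(1)[OF W, of _ n])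
  qed
  ultimately have "psd (W * S * mat_adjoint W) \<and> (W * S * mat_adjoint W) * (W * S * mat_adjoint W) = A"
    unfolding A_eq by simp
  thus ?thesis
    by blast
qed

lemma hermitian_eq_zero_if_eigenvectors_null:
  assumes X: "X \<in> carrier_mat n n" and herm: "mat_adjoint X = X"
    and null: "\<And>w r. w \<in> carrier_vec n \<Longrightarrow> conjugate w \<bullet> w = 1 \<Longrightarrow>
      X *\<^sub>v w = complex_of_real r \<cdot>\<^sub>v w \<Longrightarrow> X *\<^sub>v w = 0\<^sub>v n"
  shows "X = 0\<^sub>m n n"
proof -
  obtain W d where W: "unitary_mat n W"
    and X_eq: "X = W * mat_diag n (\<lambda>i. complex_of_real (d i)) * mat_adjoint W"
    using hermitian_spectral_decomposition[OF X herm] by blast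
  note Wc = unitary_matD(1)[OF W]
  have "d i = 0" if i: "i < n" for i
  proof -
    have col: "col W i \<in> carrier_vec n"
      using Wc i by simp
    have eigen: "X *\<^sub>v col W i = complex_of_real (d i) \<cdot>\<^sub>v col W i"
      using unitary_diag_col_eigenvector[OF W i] X_eq by simp
    hence "complex_of_real (d i) \<cdot>\<^sub>v col W i = 0\<^sub>v n"
      using null[OF col unitary_mat_col_norm[OF W i]] by simp
    hence "conjugate (col W i) \<bullet> (complex_of_real (d i) \<cdot>\<^sub>v col W i) = 0"
      using col by simp
    thus ?thesis
      using unitary_mat_col_norm[OF W i] col by simp
  qed
  hence "mat_diag n (\<lambda>i. complex_of_real (d i)) = 0\<^sub>m n n"
    by (auto simp: mat_diag_def intro!: eq_matI)
  thus ?thesis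
    using X_eq Wc by simp
qed

lemma psd_sqrt_diff_eigenvector:
  assumes B: "psd B" and C: "psd C" and Bc: "B \<in> carrier_mat n n" and Cc: "C \<in> carrier_mat n n"
    and BC: "B * (B - C) + (B - C) * C = 0\<^sub>m n n"
    and w: "w \<in> carrier_vec n" and eigen: "(B - C) *\<^sub>v w = complex_of_real r \<cdot>\<^sub>v w"
  shows "(B - C) *\<^sub>v w = 0\<^sub>v n"
proof (cases "r = 0")
  case True
  have "0 \<cdot>\<^sub>v w = 0\<^sub>v n"
    using w by (intro eq_vecI) auto
  thus ?thesis
    using eigen True by simp
next
  case False
  have Xc: "B - C \<in> carrier_mat n n"
    using minus_carrier_mat[OF Cc] .
  have herm: "mat_adjoint (B - C) = B - C"
    unfolding mat_adjoint_minus[OF Bc Cc] psd_hermitian[OF B] psd_hermitian[OF C] ..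
  have "0\<^sub>m n n *\<^sub>v w = 0\<^sub>v n"
    using w by (intro eq_vecI) (auto simp: scalar_prod_def)
  hence "0 = sesq (B * (B - C) + (B - C) * C) w w"
    using BC w by (simp add: sesq_def)
  also have "\<dots> = sesq (B * (B - C)) w w + sesq ((B - C) * C) w w"
    using Bc Cc Xc w by (simp add: sesq_def add_mult_distrib_mat_vec[of _ n n] scalar_prod_add_distrib[of _ n])
  also have "sesq (B * (B - C)) w w = complex_of_real r * sesq B w w"
    using Bc Xc w eigen by (simp add: sesq_def mult_mat_vec[OF Bc])
  also have "sesq ((B - C) * C) w w = conjugate (mat_adjoint (B - C) *\<^sub>v w) \<bullet> (C *\<^sub>v w)"
    using Cc Xc w by (simp add: sesq_def cscalar_prod_mat_adjoint[OF Xc])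
  also have "\<dots> = complex_of_real r * sesq C w w"
    unfolding herm eigen using Cc w by (simp add: sesq_def conjugate_smult_vec)
  finally have "sesq B w w + sesq C w w = 0"
    using False by (simp add: distrib_left[symmetric])
  hence "sesq B w w = 0" "sesq C w w = 0"
    using psdD[OF B Bc w] psdD[OF C Cc w] by (simp_all add: add_nonneg_eq_0_iff)
  hence "B *\<^sub>v w = 0\<^sub>v n" "C *\<^sub>v w = 0\<^sub>v n"
    using psd_sesq_eq_zero[OF B Bc w] psd_sesq_eq_zero[OF C Cc w] by simp_all
  thus ?thesis
    using Bc Cc w by (simp add: minus_mult_distrib_mat_vec)
qed

lemma psd_sqrt_unique:
  assumes B: "psd B" and C: "psd C" and BC: "B * B = C * C"
  shows "B = C"
proof -
  obtain n where Bc: "B \<in> carrier_mat n n"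
    using psd_carrier[OF B] by blast
  obtain n' where "C \<in> carrier_mat n' n'"
    using psd_carrier[OF C] by blast
  moreover have "n' = n"
    using arg_cong[OF BC, of dim_row] Bc calculation by simp
  ultimately have Cc: "C \<in> carrier_mat n n"
    by simp
  have Xc: "B - C \<in> carrier_mat n n"
    using minus_carrier_mat[OF Cc] .
  have "B * (B - C) + (B - C) * C = (B * B - B * C) + (B * C - C * C)"
    using Bc Cc by (simp add: mult_minus_distrib_mat[of _ n n _ n] minus_mult_distrib_mat[of _ n n _ _ n])
  also have "\<dots> = 0\<^sub>m n n"
    using Bc Cc BC by (intro eq_matI) auto
  finally have BC0: "B * (B - C) + (B - C) * C = 0\<^sub>m n n" .
  have "mat_adjoint (B - C) = B - C"
    unfolding mat_adjoint_minus[OF Bc Cc] psd_hermitian[OF B] psd_hermitian[OF C] ..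
  hence "B - C = 0\<^sub>m n n"
    using hermitian_eq_zero_if_eigenvectors_null[OF Xc] psd_sqrt_diff_eigenvector[OF B C Bc Cc BC0] by blast
  show ?thesis
  proof (rule eq_matI)
    fix i j assume ij: "i < dim_row C" "j < dim_col C"
    hence "B $$ (i, j) - C $$ (i, j) = (B - C) $$ (i, j)"
      using Bc Cc by simp
    also have "\<dots> = 0"
      using Cc ij \<open>B - C = 0\<^sub>m n n\<close> by simp
    finally show "B $$ (i, j) = C $$ (i, j)"
      by simp
  qed (use Bc Cc in auto)
qed

lemma msqrt:
  assumes "psd A"
  shows msqrt_psd: "psd (msqrt A)" and msqrt_mult_self: "msqrt A * msqrt A = A"
proof -
  have "\<exists>!B. psd B \<and> B * B = A"
    using psd_sqrt_exists[OF assms] psd_sqrt_unique by blast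
  hence "psd (msqrt A) \<and> msqrt A * msqrt A = A"
    unfolding msqrt_def by (rule theI')
  thus "psd (msqrt A)" "msqrt A * msqrt A = A"
    by auto
qed

lemma msqrt_unique:
  assumes "psd B" "B * B = A"
  shows "msqrt A = B"
proof -
  have "psd A"
    using psd_mult_self_adjoint[OF psd_carrier[OF assms(1)]] assms by (simp add: psd_hermitian)
  thus ?thesis
    using psd_sqrt_unique[OF msqrt_psd assms(1)] msqrt_mult_self assms(2) by simp
qed

lemma msqrt_carrier:
  assumes "psd A" "A \<in> carrier_mat n n"
  shows "msqrt A \<in> carrier_mat n n"
  using psd_carrier[OF msqrt_psd[OF assms(1)]] arg_cong[OF msqrt_mult_self[OF assms(1)], of dim_row] assms(2)
  by (metis carrier_matD(1) index_mult_mat(2))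

lemma unitary_conj_mult:
  assumes W: "unitary_mat n W" and X: "X \<in> carrier_mat n n" and Y: "Y \<in> carrier_mat n n"
  shows "(W * X * mat_adjoint W) * (W * Y * mat_adjoint W) = W * (X * Y) * mat_adjoint W"
  using X Y unitary_matD(1)[OF W]
  by (simp add: assoc_mult_mat[of _ n n _ n _ n] unitary_mat_cancel(1)[OF W, of _ n])

lemma hermitian_pseudo_inverse:
  fixes Q :: "complex mat"
  assumes Q: "Q \<in> carrier_mat n n" and herm: "mat_adjoint Q = Q"
  obtains Q' where "Q' \<in> carrier_mat n n" "mat_adjoint Q' = Q'" "Q * Q' = Q' * Q"
    "Q * Q' * Q = Q" "Q' * Q * Q' = Q'"
proof -
  obtain W d where W: "unitary_mat n W"
    and Q_eq: "Q = W * mat_diag n (\<lambda>i. complex_of_real (d i)) * mat_adjoint W"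
    using hermitian_spectral_decomposition[OF Q herm] by blast
  note Wc = unitary_matD(1)[OF W]
  define c where "c i = complex_of_real (d i)" for i
  define Q' where "Q' = W * mat_diag n (\<lambda>i. inverse (c i)) * mat_adjoint W"
  \<comment> \<open>\<open>inverse 0 = 0\<close> makes this the Moore--Penrose inverse on the kernel as well\<close>
  have inv: "x * (x * inverse x) = x" "inverse x * (x * inverse x) = inverse x" for x :: complex
    by (cases "x = 0"; simp)+
  have "Q' \<in> carrier_mat n n"
    using Wc by (simp add: Q'_def)
  moreover have "mat_adjoint Q' = Q'"
    using Wc by (simp add: Q'_def mat_adjoint_mult[of _ n n _ n] mat_adjoint_diag c_def
        assoc_mult_mat[of _ n n _ n _ n])
  moreover have "Q * Q' = Q' * Q" "Q * Q' * Q = Q" "Q' * Q * Q' = Q'"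
    unfolding Q_eq Q'_def c_def[symmetric] using Wc
    by (simp_all add: unitary_conj_mult[OF W] mult.commute inv)
  ultimately show ?thesis
    using that by blast
qed

lemma mult_right_eq_if_gram_eq:
  fixes A :: "complex mat"
  assumes A: "A \<in> carrier_mat n n" and Q: "Q \<in> carrier_mat n n" and P: "P \<in> carrier_mat n n"
    and gram: "mat_adjoint A * A = mat_adjoint Q * Q" and QP: "Q * P = Q"
  shows "A * P = A"
proof -
  note assoc = assoc_mult_mat[of _ n n _ n _ n]
  define R where "R = P - 1\<^sub>m n"
  have R: "R \<in> carrier_mat n n"
    unfolding R_def using minus_carrier_mat[OF one_carrier_mat] .
  have "Q * R = 0\<^sub>m n n"
    unfolding R_def using Q P QP by (simp add: mult_minus_distrib_mat[of _ n n _ n])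
  have "mat_adjoint (A * R) * (A * R) = mat_adjoint R * (mat_adjoint A * A) * R"
    using A R by (simp add: mat_adjoint_mult[of _ n n _ n] assoc)
  also have "\<dots> = mat_adjoint (Q * R) * (Q * R)"
    unfolding gram using Q R by (simp add: mat_adjoint_mult[of _ n n _ n] assoc)
  also have "\<dots> = 0\<^sub>m n n"
    using \<open>Q * R = 0\<^sub>m n n\<close> Q by simp
  finally have "A * R = 0\<^sub>m n n"
    by (rule mat_adjoint_mult_self_eq_zero[OF mult_carrier_mat[OF A R]])
  moreover have "A * R = A * P - A"
    unfolding R_def using A P by (simp add: mult_minus_distrib_mat[of _ n n _ n])
  ultimately have diff: "A * P - A = 0\<^sub>m n n"
    by simp
  show ?thesis
  proof (rule eq_matI)
    fix i j assume ij: "i < dim_row A" "j < dim_col A"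
    have "(A * P - A) $$ (i, j) = 0"
      using diff A ij by simp
    thus "(A * P) $$ (i, j) = A $$ (i, j)"
      using A P ij by simp
  qed (use A P in auto)
qed

definition polar_decomp :: "complex mat \<Rightarrow> complex mat \<Rightarrow> complex mat \<Rightarrow> bool" where
  "polar_decomp A U Q \<longleftrightarrow> psd Q \<and> U * Q = A \<and> mat_adjoint U * A = Q \<and> U * (mat_adjoint U * U) = U"

lemma polar_decomp_exists:
  assumes A: "A \<in> carrier_mat n n"
  obtains U where "U \<in> carrier_mat n n" "polar_decomp A U (msqrt (mat_adjoint A * A))"
proof -
  note assoc = assoc_mult_mat[of _ n n _ n _ n]
  define Q where "Q = msqrt (mat_adjoint A * A)"
  have "psd (mat_adjoint A * A)"
    using psd_mult_self_adjoint[OF mat_adjoint_carrier[OF A]] by simp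
  hence Q: "psd Q" "Q * Q = mat_adjoint A * A" "Q \<in> carrier_mat n n"
    unfolding Q_def using A by (auto intro: msqrt_psd msqrt_mult_self msqrt_carrier)
  have herm: "mat_adjoint Q = Q"
    using psd_hermitian[OF Q(1)] .
  obtain Q' where Q': "Q' \<in> carrier_mat n n" "mat_adjoint Q' = Q'" "Q * Q' = Q' * Q"
    "Q * Q' * Q = Q" "Q' * Q * Q' = Q'"
    using hermitian_pseudo_inverse[OF Q(3) herm] by blast
  have "Q * (Q * Q') = Q * (Q' * Q)"
    by (simp only: Q'(3))
  also have "\<dots> = Q"
    using assoc_mult_mat[OF Q(3) Q'(1) Q(3)] Q'(3-4) by simp
  finally have "Q * (Q * Q') = Q" .
  have AQQ': "A * (Q * Q') = A"
    by (rule mult_right_eq_if_gram_eq[OF A Q(3) _ _ \<open>Q * (Q * Q') = Q\<close>]) (use Q Q' herm in simp_all)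
  define U where "U = A * Q'"
  have UA: "mat_adjoint U * A = Q"
  proof -
    have "mat_adjoint U * A = Q' * Q * Q"
      using A Q(3) Q'(1) by (simp add: U_def mat_adjoint_mult[of _ n n _ n] Q'(2) assoc flip: Q(2))
    thus ?thesis
      using Q'(4) by (simp add: Q'(3))
  qed
  have "mat_adjoint U * U = Q * Q'"
    unfolding U_def UA[unfolded U_def, symmetric] using A Q'(1)
    by (simp add: assoc_mult_mat[of "mat_adjoint (A * Q')" n n A n Q' n])
  hence "U * (mat_adjoint U * U) = A * (Q' * Q * Q')"
    using A Q(3) Q'(1) by (simp add: U_def assoc)
  hence "U * (mat_adjoint U * U) = U"
    using Q'(5) by (simp add: U_def)
  moreover have "U * Q = A"
    using A Q(3) Q'(1) AQQ' by (simp add: U_def assoc Q'(3))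
  moreover have "U \<in> carrier_mat n n"
    using A Q'(1) by (simp add: U_def)
  ultimately show ?thesis
    using that Q(1) UA unfolding polar_decomp_def Q_def by blast
qed

lemma polar_decompD:
  assumes polar: "polar_decomp A U Q" and U: "U \<in> carrier_mat n n" and A: "A \<in> carrier_mat n n"
  shows "psd Q" "Q \<in> carrier_mat n n" "U * Q = A" "mat_adjoint U * A = Q" "U * (mat_adjoint U * U) = U"
    "mat_adjoint A * U = Q" "Q * mat_adjoint U = mat_adjoint A"
proof -
  show pQ: "psd Q" and UQ: "U * Q = A" and UA: "mat_adjoint U * A = Q"
    and "U * (mat_adjoint U * U) = U"
    using polar by (auto simp: polar_decomp_def)
  show Q: "Q \<in> carrier_mat n n"
    using U A UA by (metis mat_adjoint_carrier mult_carrier_mat)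
  show "mat_adjoint A * U = Q"
    using arg_cong[OF UA, of mat_adjoint] U A by (simp add: mat_adjoint_mult[of _ n n _ n] psd_hermitian[OF pQ])
  show "Q * mat_adjoint U = mat_adjoint A"
    using arg_cong[OF UQ, of mat_adjoint] U Q by (simp add: mat_adjoint_mult[of _ n n _ n] psd_hermitian[OF pQ])
qed

lemma smult_unimodular_cancel:
  fixes X :: "complex mat"
  assumes "cmod c = 1"
  shows "cnj c \<cdot>\<^sub>m (c \<cdot>\<^sub>m X) = X" "c \<cdot>\<^sub>m (cnj c \<cdot>\<^sub>m X) = X"
proof -
  have "cnj c * c = 1"
    using complex_norm_square[of c] assms by (simp add: mult.commute)
  thus "cnj c \<cdot>\<^sub>m (c \<cdot>\<^sub>m X) = X" "c \<cdot>\<^sub>m (cnj c \<cdot>\<^sub>m X) = X"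
    by (auto intro!: eq_matI simp: mult.assoc[symmetric] mult.commute[of c])
qed

lemma polar_decomp_smult:
  assumes polar: "polar_decomp A U Q" and U: "U \<in> carrier_mat n n" and A: "A \<in> carrier_mat n n"
    and c: "cmod c = 1"
  shows "polar_decomp (c \<cdot>\<^sub>m A) (c \<cdot>\<^sub>m U) Q"
proof -
  show ?thesis
    using polar U A polar_decompD(2)[OF polar U A] unfolding polar_decomp_def
    by (simp add: mat_adjoint_smult mult_smult_assoc_mat[of _ n n _ n] mult_smult_distrib[of _ n n _ n]
        smult_unimodular_cancel[OF c])
qed

lemma partial_isometry_complement_projection:
  fixes U :: "complex mat"
  assumes U: "U \<in> carrier_mat n n" and "U * (mat_adjoint U * U) = U"
  defines "R \<equiv> 1\<^sub>m n - U * mat_adjoint U"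
  shows "mat_adjoint R = R" "R * R = R"
proof -
  have X: "U * mat_adjoint U \<in> carrier_mat n n"
    using U by simp
  have "U * mat_adjoint U * (U * mat_adjoint U) = U * (mat_adjoint U * U) * mat_adjoint U"
    using U by (simp add: assoc_mult_mat[of _ n n _ n _ n])
  hence XX: "U * mat_adjoint U * (U * mat_adjoint U) = U * mat_adjoint U"
    using assms(2) by simp
  show "mat_adjoint R = R"
    unfolding R_def using U by (simp add: mat_adjoint_minus[of _ n n] mat_adjoint_mult[of _ n n _ n])
  have R: "R \<in> carrier_mat n n"
    unfolding R_def using minus_carrier_mat[OF X] .
  have "(1\<^sub>m n - U * mat_adjoint U) * R = 1\<^sub>m n * R - U * mat_adjoint U * R"
    by (rule minus_mult_distrib_mat[OF one_carrier_mat X R])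
  hence "R * R = 1\<^sub>m n * R - U * mat_adjoint U * R"
    unfolding R_def .
  also have "U * mat_adjoint U * R = U * mat_adjoint U - U * mat_adjoint U * (U * mat_adjoint U)"
    unfolding R_def using mult_minus_distrib_mat[OF X one_carrier_mat X] U by simp
  also have "\<dots> = U * mat_adjoint U - U * mat_adjoint U"
    unfolding XX ..
  finally show "R * R = R"
    using R X by (intro eq_matI) auto
qed

lemma mult_complement_eq_zero:
  fixes A :: "complex mat"
  assumes A: "A \<in> carrier_mat n n" and X: "X \<in> carrier_mat n n" and zero: "A * (1\<^sub>m n - X) = 0\<^sub>m n n"
  shows "A = A * X"
proof -
  have diff: "A - A * X = 0\<^sub>m n n"
    using zero A X by (simp add: mult_minus_distrib_mat[of _ n n _ n])
  show ?thesis
  proof (rule eq_matI)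
    fix i j assume ij: "i < dim_row (A * X)" "j < dim_col (A * X)"
    have "(A - A * X) $$ (i, j) = 0\<^sub>m n n $$ (i, j)"
      unfolding diff ..
    thus "A $$ (i, j) = (A * X) $$ (i, j)"
      using ij A X by simp
  qed (use A X in auto)
qed

section \<open>Block matrices\<close>

lemma zero_width_mult [simp]: "(0\<^sub>m a 0 :: 'a :: semiring_0 mat) * 0\<^sub>m 0 b = 0\<^sub>m a b"
  by (rule eq_matI) (auto simp: scalar_prod_def)

lemma four_block_mat_zero_size [simp]:
  "S \<in> carrier_mat m k \<Longrightarrow> four_block_mat S (0\<^sub>m m 0) (0\<^sub>m 0 k) (0\<^sub>m 0 0) = S"
  by (rule eq_matI) auto

lemma four_block_mult_append_rows:
  fixes A :: "'a :: comm_ring mat"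
  assumes "A \<in> carrier_mat n1 m1" "B \<in> carrier_mat n1 m2" "C \<in> carrier_mat n2 m1" "D \<in> carrier_mat n2 m2"
    "X \<in> carrier_mat m1 k" "Y \<in> carrier_mat m2 k"
  shows "four_block_mat A B C D * (X @\<^sub>r Y) = (A * X + B * Y) @\<^sub>r (C * X + D * Y)"
  unfolding append_rows_def using assms
  by (subst mult_four_block_mat[of _ n1 m1 _ m2 _ n2 _ _ k _ 0]) auto

lemma mat_adjoint_append_rows_mult:
  assumes "E \<in> carrier_mat n1 m" "F \<in> carrier_mat n2 m" "X \<in> carrier_mat n1 k" "Y \<in> carrier_mat n2 k"
  shows "mat_adjoint (E @\<^sub>r F) * (X @\<^sub>r Y) = mat_adjoint E * X + mat_adjoint F * Y"
proof -
  have "mat_adjoint (E @\<^sub>r F) = four_block_mat (mat_adjoint E) (mat_adjoint F) (0\<^sub>m 0 n1) (0\<^sub>m 0 n2)"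
    unfolding append_rows_def using assms by (subst mat_adjoint_four_block) auto
  moreover have "mat_adjoint E * X + mat_adjoint F * Y \<in> carrier_mat m k"
    using mult_carrier_mat[OF mat_adjoint_carrier[OF assms(1)] assms(3)]
      mult_carrier_mat[OF mat_adjoint_carrier[OF assms(2)] assms(4)] by simp
  ultimately show ?thesis
    unfolding append_rows_def using assms
    by (simp add: mult_four_block_mat[of _ m n1 _ n2 _ 0 _ _ k _ 0])
qed

lemma append_rows_mult_mat_adjoint:
  assumes "E \<in> carrier_mat n1 m" "F \<in> carrier_mat n2 m" "X \<in> carrier_mat k1 m" "Y \<in> carrier_mat k2 m"
  shows "(E @\<^sub>r F) * mat_adjoint (X @\<^sub>r Y) =
    four_block_mat (E * mat_adjoint X) (E * mat_adjoint Y) (F * mat_adjoint X) (F * mat_adjoint Y)"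
proof -
  have "mat_adjoint (X @\<^sub>r Y) = four_block_mat (mat_adjoint X) (mat_adjoint Y) (0\<^sub>m 0 k1) (0\<^sub>m 0 k2)"
    unfolding append_rows_def using assms by (subst mat_adjoint_four_block) auto
  thus ?thesis
    unfolding append_rows_def using assms
    by (simp add: mult_four_block_mat[of _ n1 m _ 0 _ n2 _ _ k1 _ k2])
qed

lemma append_rows_mult:
  assumes "X \<in> carrier_mat n1 m" "Y \<in> carrier_mat n2 m" "B \<in> carrier_mat m k"
  shows "(X @\<^sub>r Y) * B = (X * B) @\<^sub>r (Y * B)"
proof -
  have "(X @\<^sub>r Y) * B =
      four_block_mat X (0\<^sub>m n1 0) Y (0\<^sub>m n2 0) * four_block_mat B (0\<^sub>m m 0) (0\<^sub>m 0 k) (0\<^sub>m 0 0)"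
    unfolding append_rows_def using assms by simp
  also have "\<dots> = four_block_mat (X * B + 0\<^sub>m n1 0 * 0\<^sub>m 0 k) (X * 0\<^sub>m m 0 + 0\<^sub>m n1 0 * 0\<^sub>m 0 0)
      (Y * B + 0\<^sub>m n2 0 * 0\<^sub>m 0 k) (Y * 0\<^sub>m m 0 + 0\<^sub>m n2 0 * 0\<^sub>m 0 0)"
    by (rule mult_four_block_mat) (use assms in auto)
  also have "\<dots> = (X * B) @\<^sub>r (Y * B)"
    unfolding append_rows_def using assms by simp
  finally show ?thesis .
qed

lemma append_rows_eq_zero:
  assumes "E \<in> carrier_mat n1 k" "F \<in> carrier_mat n2 k" "E @\<^sub>r F = 0\<^sub>m (n1 + n2) k"
  shows "E = 0\<^sub>m n1 k" "F = 0\<^sub>m n2 k"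
proof -
  have entry: "(E @\<^sub>r F) $$ (i, j) = 0" if "i < n1 + n2" "j < k" for i j
    using assms(3) that by simp
  show "E = 0\<^sub>m n1 k"
  proof (rule eq_matI)
    fix i j assume "i < dim_row (0\<^sub>m n1 k)" "j < dim_col (0\<^sub>m n1 k)"
    thus "E $$ (i, j) = 0\<^sub>m n1 k $$ (i, j)"
      using assms(1,2) entry[of i j] by (simp add: append_rows_def)
  qed (use assms in auto)
  show "F = 0\<^sub>m n2 k"
  proof (rule eq_matI)
    fix i j assume "i < dim_row (0\<^sub>m n2 k)" "j < dim_col (0\<^sub>m n2 k)"
    thus "F $$ (i, j) = 0\<^sub>m n2 k $$ (i, j)"
      using assms(1,2) entry[of "n1 + i" j] by (simp add: append_rows_def)
  qed (use assms in auto)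
qed

lemma neg_add_eq_zero_mat:
  fixes X :: "'a :: ab_group_add mat"
  assumes "X \<in> carrier_mat n m" "Y \<in> carrier_mat n m" "- X + Y = 0\<^sub>m n m"
  shows "Y = X"
proof (rule eq_matI)
  fix i j assume "i < dim_row X" "j < dim_col X"
  thus "Y $$ (i, j) = X $$ (i, j)"
    using assms(1,2) arg_cong[OF assms(3), of "\<lambda>M. M $$ (i, j)"] by simp
qed (use assms in auto)

lemma psd_four_block_hermitian:
  assumes "psd (four_block_mat A B C D)"
    "A \<in> carrier_mat n1 n1" "B \<in> carrier_mat n1 n2" "C \<in> carrier_mat n2 n1" "D \<in> carrier_mat n2 n2"
  shows "C = mat_adjoint B"
proof (rule eq_matI)
  fix i j assume ij: "i < dim_row (mat_adjoint B)" "j < dim_col (mat_adjoint B)"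
  have "mat_adjoint (four_block_mat A B C D) $$ (n1 + i, j) = four_block_mat A B C D $$ (n1 + i, j)"
    using psd_hermitian[OF assms(1)] by simp
  thus "C $$ (i, j) = mat_adjoint B $$ (i, j)"
    using assms(2-5) ij by simp
qed (use assms in auto)

lemma psd_four_block_upper_left:
  assumes p: "psd (four_block_mat A B C D)" and A: "A \<in> carrier_mat n1 n1"
    and B: "B \<in> carrier_mat n1 n2" and C: "C \<in> carrier_mat n2 n1" and D: "D \<in> carrier_mat n2 n2"
  shows "psd A"
proof -
  let ?T = "1\<^sub>m n1 @\<^sub>r 0\<^sub>m n2 n1"
  have "four_block_mat A B C D * ?T = (A * 1\<^sub>m n1 + B * 0\<^sub>m n2 n1) @\<^sub>r (C * 1\<^sub>m n1 + D * 0\<^sub>m n2 n1)"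
    using A B C D by (intro four_block_mult_append_rows) auto
  also have "\<dots> = A @\<^sub>r C"
    using A B C D by simp
  finally have "mat_adjoint ?T * four_block_mat A B C D * ?T = mat_adjoint ?T * (A @\<^sub>r C)"
    using A B C D by (simp add: assoc_mult_mat[of _ n1 "n1 + n2" _ "n1 + n2" _ n1])
  also have "\<dots> = A"
    using A C by (simp add: mat_adjoint_append_rows_mult[of _ n1 n1 _ n2 _ n1])
  finally have "mat_adjoint ?T * four_block_mat A B C D * ?T = A" .
  thus ?thesis
    using psd_congruence[OF p mat_adjoint_carrier[of ?T "n1 + n2" n1]] A B C D by simp
qed

lemma polar_decomp_left_factor:
  assumes polar: "polar_decomp A U Q" and U: "U \<in> carrier_mat n n" and A: "A \<in> carrier_mat n n"
  defines "P \<equiv> U * Q * mat_adjoint U"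
  shows "psd P" "P = A * mat_adjoint U" "msqrt (A * mat_adjoint A) = P" "mtrace P = mtrace Q"
    "psd (four_block_mat P A (mat_adjoint A) Q)"
proof -
  note polar = polar_decompD[OF polar U A]
  note pQ = polar(1) and Q = polar(2) and UQ = polar(3) and UA = polar(4) and AU = polar(6) and QU = polar(7)
  show pP: "psd P"
    unfolding P_def by (rule psd_congruence[OF pQ U Q])
  show P_eq: "P = A * mat_adjoint U"
    unfolding P_def UQ[symmetric] ..
  have "P * P = U * Q * (mat_adjoint U * A) * mat_adjoint U"
    unfolding P_def UQ[symmetric] using U Q by (simp add: assoc_mult_mat[of _ n n _ n _ n])
  also have "\<dots> = A * mat_adjoint A"
    unfolding UA using U Q by (simp add: assoc_mult_mat[of _ n n _ n _ n] QU flip: UQ)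
  finally show "msqrt (A * mat_adjoint A) = P"
    by (rule msqrt_unique[OF pP])
  have "mtrace P = mtrace (Q * mat_adjoint U * U)"
    unfolding P_def using U Q by (simp add: mtrace_mult_comm[of U n n] assoc_mult_mat[of _ n n _ n _ n])
  thus "mtrace P = mtrace Q"
    using U Q by (simp add: QU AU)
  have "(U @\<^sub>r 1\<^sub>m n) * Q * mat_adjoint (U @\<^sub>r 1\<^sub>m n) = four_block_mat P A (mat_adjoint A) Q"
    using U Q A by (simp add: append_rows_mult[of _ n n _ n] append_rows_mult_mat_adjoint[of _ n n _ n _ n _ n]
        P_def UQ QU)
  thus "psd (four_block_mat P A (mat_adjoint A) Q)"
    using psd_congruence[OF pQ _ Q, of "U @\<^sub>r 1\<^sub>m n" "n + n"] U by simp
qed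

lemma block_test_congruence:
  fixes A :: "complex mat"
  assumes A: "A \<in> carrier_mat n n" and B: "B \<in> carrier_mat n n" and Th: "Th \<in> carrier_mat n n"
    and U: "U \<in> carrier_mat n n" and Q: "Q \<in> carrier_mat n n"
    and UTh: "mat_adjoint U * Th = Q" and ThU: "mat_adjoint Th * U = Q"
  defines "T \<equiv> (- U) @\<^sub>r 1\<^sub>m n"
  shows "four_block_mat A Th (mat_adjoint Th) B * T = (- (A * U) + Th) @\<^sub>r (- Q + B)"
    and "mat_adjoint T * (four_block_mat A Th (mat_adjoint Th) B * T) =
      mat_adjoint U * (A * U) + - Q + (- Q + B)"
proof -
  show NT: "four_block_mat A Th (mat_adjoint Th) B * T = (- (A * U) + Th) @\<^sub>r (- Q + B)"
    unfolding T_def using A B Th U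
    by (subst four_block_mult_append_rows[of _ n n _ n _ n]) (auto simp: ThU)
  have "mat_adjoint T * (four_block_mat A Th (mat_adjoint Th) B * T) =
      mat_adjoint (- U) * (- (A * U) + Th) + mat_adjoint (1\<^sub>m n) * (- Q + B)"
    unfolding NT unfolding T_def using A B Th U Q
    by (intro mat_adjoint_append_rows_mult) auto
  also have "\<dots> = mat_adjoint U * (A * U) + - Q + (- Q + B)"
    using A B Th U Q UTh
    by (simp add: mat_adjoint_uminus mult_add_distrib_mat[of _ n n _ n])
  finally show "mat_adjoint T * (four_block_mat A Th (mat_adjoint Th) B * T) =
      mat_adjoint U * (A * U) + - Q + (- Q + B)" .
qed

lemma polar_block_test_trace:
  fixes A :: "complex mat"
  assumes A: "A \<in> carrier_mat n n" and B: "B \<in> carrier_mat n n" and Th: "Th \<in> carrier_mat n n"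
    and U: "U \<in> carrier_mat n n" and polar: "polar_decomp Th U Q"
    and trA: "mtrace A = mtrace Q" and trB: "mtrace B = mtrace Q"
  defines "T \<equiv> (- U) @\<^sub>r 1\<^sub>m n" and "R \<equiv> 1\<^sub>m n - U * mat_adjoint U"
  shows "mtrace (mat_adjoint T * four_block_mat A Th (mat_adjoint Th) B * T) = - mtrace (mat_adjoint R * A * R)"
proof -
  note Q = polar_decompD[OF polar U Th]
  have R: "R \<in> carrier_mat n n" "mat_adjoint R = R" "R * R = R"
    using partial_isometry_complement_projection[OF U Q(5)] minus_carrier_mat[of "U * mat_adjoint U" n n]
      U by (simp_all add: R_def)
  have "A * R = A - A * U * mat_adjoint U"
    unfolding R_def using A U by (simp add: mult_minus_distrib_mat[of _ n n _ n] assoc_mult_mat[of _ n n _ n _ n])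
  moreover have "mtrace (A * U * mat_adjoint U) = mtrace (mat_adjoint U * (A * U))"
    using A U by (intro mtrace_mult_comm) auto
  ultimately have trAR: "mtrace (A * R) = mtrace Q - mtrace (mat_adjoint U * (A * U))"
    using A U trA by (simp add: mtrace_minus)
  let ?N = "four_block_mat A Th (mat_adjoint Th) B"
  have "mat_adjoint T * ?N * T = mat_adjoint T * (?N * T)"
    using A B Th U by (intro assoc_mult_mat[of _ n "n + n" _ "n + n" _ n]) (auto simp: T_def)
  also have "\<dots> = mat_adjoint U * (A * U) + - Q + (- Q + B)"
    unfolding T_def by (rule block_test_congruence(2)[OF A B Th U Q(2,4,6)])
  finally have "mtrace (mat_adjoint T * ?N * T) = mtrace (mat_adjoint U * (A * U)) - mtrace Q - mtrace Q + mtrace B"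
    using A B U Q(2) by (simp add: mtrace_add[of _ n] mtrace_uminus[of _ n])
  thus ?thesis
    using trB trAR mtrace_mult_projection[OF A R] by simp
qed

lemma psd_block_polar_rigid:
  fixes A :: "complex mat"
  assumes N: "psd (four_block_mat A Th C B)"
    and A: "A \<in> carrier_mat n n" and B: "B \<in> carrier_mat n n" and C: "C \<in> carrier_mat n n"
    and Th: "Th \<in> carrier_mat n n" and U: "U \<in> carrier_mat n n" and polar: "polar_decomp Th U Q"
    and trA: "mtrace A = mtrace Q" and trB: "mtrace B = mtrace Q"
  shows "B = Q \<and> A = Th * mat_adjoint U"
proof -
  note Q = polar_decompD[OF polar U Th]
  let ?N = "four_block_mat A Th (mat_adjoint Th) B"
  define T where "T = (- U) @\<^sub>r 1\<^sub>m n"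
  define R where "R = 1\<^sub>m n - U * mat_adjoint U"
  have Nc: "?N \<in> carrier_mat (n + n) (n + n)" and Tc: "T \<in> carrier_mat (n + n) n"
    and Rc: "R \<in> carrier_mat n n"
    using A B Th U by (auto simp: T_def R_def)
  have pN: "psd ?N"
    using N psd_four_block_hermitian[OF N A Th C B] by simp
  have pA: "psd A"
    by (rule psd_four_block_upper_left[OF N A Th C B])
  note trN = polar_block_test_trace[OF A B Th U polar trA trB, folded T_def R_def]
  have "0 \<le> mtrace (mat_adjoint R * A * R)"
    using psd_mtrace_nonneg[OF psd_congruence[OF pA mat_adjoint_carrier[OF Rc] A]] by simp
  hence "Re (mtrace (mat_adjoint T * ?N * T)) \<le> 0"
    unfolding trN by (simp add: less_eq_complex_def)
  hence NT: "?N * T = 0\<^sub>m (n + n) n"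
    by (rule psd_mult_eq_zero_if_mtrace_nonpos[OF pN Nc Tc])
  moreover have "- (A * U) + Th \<in> carrier_mat n n" "- Q + B \<in> carrier_mat n n"
    using A B U Q(2) Th by auto
  ultimately have "- (A * U) + Th = 0\<^sub>m n n" "- Q + B = 0\<^sub>m n n"
    using append_rows_eq_zero block_test_congruence(1)[OF A B Th U Q(2,4,6), folded T_def] by metis+
  hence Th_eq: "Th = A * U" and "B = Q"
    using neg_add_eq_zero_mat[of "A * U" n n Th] neg_add_eq_zero_mat[of Q n n B] A B U Q(2) Th by auto
  \<comment> \<open>now the test trace vanishes, which forces \<open>A\<close> to be supported on the range of \<open>U\<close>\<close>
  have "mat_adjoint T * ?N * T = 0\<^sub>m n n"
    using Nc Tc NT by (simp add: assoc_mult_mat[of _ n "n + n" _ "n + n" _ n])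
  hence "Re (mtrace (mat_adjoint R * A * R)) \<le> 0"
    using trN by (simp add: mtrace_def)
  hence "A * R = 0\<^sub>m n n"
    by (rule psd_mult_eq_zero_if_mtrace_nonpos[OF pA A Rc])
  hence AUU: "A = A * (U * mat_adjoint U)"
    unfolding R_def using U by (intro mult_complement_eq_zero[OF A]) auto
  have "Th * mat_adjoint U = A * (U * mat_adjoint U)"
    unfolding Th_eq using A U by (simp add: assoc_mult_mat[of _ n n _ n _ n])
  also note AUU[symmetric]
  finally show ?thesis
    using \<open>B = Q\<close> by simp
qed


section \<open>Quantum channels\<close>

lemma ampl_two_four_block:
  assumes \<tau>: "\<forall>X \<in> carrier_mat n n. \<tau> X \<in> carrier_mat n n"
    and A: "A \<in> carrier_mat n n" and B: "B \<in> carrier_mat n n"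
    and C: "C \<in> carrier_mat n n" and D: "D \<in> carrier_mat n n"
  shows "ampl 2 n \<tau> (four_block_mat A B C D) = four_block_mat (\<tau> A) (\<tau> B) (\<tau> C) (\<tau> D)"
proof -
  let ?F = "four_block_mat A B C D"
  let ?blk = "\<lambda>k l. mat n n (\<lambda>(a, b). ?F $$ (k * n + a, l * n + b))"
  have blocks: "?blk 0 0 = A" "?blk 0 1 = B" "?blk 1 0 = C" "?blk 1 1 = D"
    using A B C D by (auto intro!: eq_matI)
  have split: "p div n = (if p < n then 0 else 1) \<and> p mod n = (if p < n then p else p - n)"
    if "p < n + n" for p
    using that by (auto simp: div_if mod_if le_div_geq le_mod_geq)
  have \<tau>c: "\<tau> A \<in> carrier_mat n n" "\<tau> B \<in> carrier_mat n n" "\<tau> C \<in> carrier_mat n n" "\<tau> D \<in> carrier_mat n n"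
    using \<tau> A B C D by auto
  show ?thesis
  proof (rule eq_matI)
    fix p q assume "p < dim_row (four_block_mat (\<tau> A) (\<tau> B) (\<tau> C) (\<tau> D))"
      "q < dim_col (four_block_mat (\<tau> A) (\<tau> B) (\<tau> C) (\<tau> D))"
    hence p: "p < n + n" and q: "q < n + n"
      using \<tau>c by auto
    show "ampl 2 n \<tau> ?F $$ (p, q) = four_block_mat (\<tau> A) (\<tau> B) (\<tau> C) (\<tau> D) $$ (p, q)"
      unfolding ampl_def using p q split[OF p] split[OF q] blocks \<tau>c by (auto simp: mult_2)
  qed (use \<tau>c in \<open>auto simp: ampl_def\<close>)
qed

lemma quantum_channelD:
  assumes "quantum_channel n \<tau>" "A \<in> carrier_mat n n"
  shows quantum_channel_carrier: "\<tau> A \<in> carrier_mat n n"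
    and quantum_channel_smult: "\<tau> (c \<cdot>\<^sub>m A) = c \<cdot>\<^sub>m \<tau> A"
    and quantum_channel_mtrace: "mtrace (\<tau> A) = mtrace A"
  using assms unfolding quantum_channel_def linear_map_mat_def trace_preserving_def by auto

lemma quantum_channel_fixes_polar_factors:
  assumes ch: "quantum_channel n \<tau>" and Th: "Th \<in> carrier_mat n n"
    and eigen: "\<tau> Th = lam \<cdot>\<^sub>m Th" and unimodular: "cmod lam = 1"
    and polar: "polar_decomp Th U Q" and U: "U \<in> carrier_mat n n"
  shows "\<tau> Q = Q" "\<tau> (U * Q * mat_adjoint U) = U * Q * mat_adjoint U"
proof -
  define P where "P = U * Q * mat_adjoint U"
  note P = polar_decomp_left_factor[OF polar U Th, folded P_def]
  have Q: "Q \<in> carrier_mat n n"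
    by (rule polar_decompD(2)[OF polar U Th])
  have Pc: "P \<in> carrier_mat n n"
    using U Q by (simp add: P_def)
  have "four_block_mat P Th (mat_adjoint Th) Q \<in> carrier_mat (2 * n) (2 * n)"
    using Pc Th Q by (simp add: mult_2)
  hence "psd (ampl 2 n \<tau> (four_block_mat P Th (mat_adjoint Th) Q))"
    using ch P(5) unfolding quantum_channel_def completely_positive_def by blast
  hence "psd (four_block_mat (\<tau> P) (lam \<cdot>\<^sub>m Th) (\<tau> (mat_adjoint Th)) (\<tau> Q))"
    using ampl_two_four_block[OF _ Pc Th mat_adjoint_carrier[OF Th] Q] quantum_channel_carrier[OF ch] eigen
    by simp
  \<comment> \<open>the amplified block has off-diagonal part \<open>lam \<cdot> \<Theta>\<close>, whose polar factors are \<open>lam \<cdot> U\<close> and \<open>Q\<close>\<close>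
  moreover have "polar_decomp (lam \<cdot>\<^sub>m Th) (lam \<cdot>\<^sub>m U) Q"
    by (rule polar_decomp_smult[OF polar U Th unimodular])
  moreover have "mtrace (\<tau> P) = mtrace Q" "mtrace (\<tau> Q) = mtrace Q"
    using P(4) quantum_channel_mtrace[OF ch] Pc Q by simp_all
  ultimately have "\<tau> Q = Q \<and> \<tau> P = (lam \<cdot>\<^sub>m Th) * mat_adjoint (lam \<cdot>\<^sub>m U)"
    using psd_block_polar_rigid[of "\<tau> P" "lam \<cdot>\<^sub>m Th" "\<tau> (mat_adjoint Th)" "\<tau> Q" n "lam \<cdot>\<^sub>m U" Q]
      quantum_channel_carrier[OF ch] Pc Th U Q by simp
  moreover have "(lam \<cdot>\<^sub>m Th) * mat_adjoint (lam \<cdot>\<^sub>m U) = P"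
    using Th U by (simp add: P(2) mat_adjoint_smult mult_smult_assoc_mat[of _ n n _ n]
        mult_smult_distrib[of _ n n _ n] smult_unimodular_cancel[OF unimodular])
  ultimately show "\<tau> Q = Q" "\<tau> P = P"
    by simp_all
qed

lemma density_matrix_normalize:
  assumes "psd A" "A \<in> carrier_mat n n" "0 < mtrace A"
  shows "density_matrix n ((1 / mtrace A) \<cdot>\<^sub>m A)"
proof -
  have "0 \<le> 1 / mtrace A"
    using assms(3) by (simp add: less_eq_complex_def less_complex_def Re_divide Im_divide)
  thus ?thesis
    unfolding density_matrix_def using assms psd_smult by (auto simp: mtrace_smult)
qed

theorem mainTheorem13:
  fixes n :: nat and \<tau> :: "complex mat \<Rightarrow> complex mat"
    and Th :: "complex mat" and lam :: complex
  assumes "quantum_channel n \<tau>"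
    and "Th \<in> carrier_mat n n" and "Th \<noteq> 0\<^sub>m n n"
    and "\<tau> Th = lam \<cdot>\<^sub>m Th" and "cmod lam = 1"
  shows "let g = mtrace (msqrt (mat_adjoint Th * Th));
             \<rho> = (1 / g) \<cdot>\<^sub>m msqrt (Th * mat_adjoint Th);
             \<sigma> = (1 / g) \<cdot>\<^sub>m msqrt (mat_adjoint Th * Th)
         in density_matrix n \<rho> \<and> density_matrix n \<sigma> \<and> \<tau> \<rho> = \<rho> \<and> \<tau> \<sigma> = \<sigma>"
proof -
  define Q where "Q = msqrt (mat_adjoint Th * Th)"
  obtain U where U: "U \<in> carrier_mat n n" and polar: "polar_decomp Th U Q"
    using polar_decomp_exists[OF assms(2)] unfolding Q_def by blast
  define P where "P = U * Q * mat_adjoint U"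
  note P = polar_decomp_left_factor[OF polar U assms(2), folded P_def]
  note fixed = quantum_channel_fixes_polar_factors[OF assms(1,2,4,5) polar U, folded P_def]
  have Q: "psd Q" "Q \<in> carrier_mat n n"
    using polar_decompD(1,2)[OF polar U assms(2)] .
  have "Q \<noteq> 0\<^sub>m n n"
    using polar_decompD(3)[OF polar U assms(2)] assms(3) U by auto
  hence "0 < mtrace Q"
    by (rule psd_mtrace_pos[OF Q])
  moreover have "P \<in> carrier_mat n n"
    using U Q by (simp add: P_def)
  ultimately show ?thesis
    unfolding Let_def Q_def[symmetric] P(3)
    using density_matrix_normalize[OF P(1)] density_matrix_normalize[OF Q] P(4)
      quantum_channel_smult[OF assms(1)] fixed Q by simp
qed

end
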